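(* For every fermionic state $\rho$ of a system $\mathsf{L}_\mathsf{F}$ of $L$ local fermionic modes there exists a pure state $\Psi_\rho$ of some composite system $\mathsf{L}_\mathsf{F}\mathsf{M}_\mathsf{F}$ with $\operatorname{Tr}^f_{\mathsf{M}_\mathsf{F}}\Psi_\rho=\rho$ (a purification). Moreover, if $\Psi_\rho$ is a pure state of $\mathsf{L}_\mathsf{F}\mathsf{M}_\mathsf{F}$ and $\Phi_\rho$ is a pure state of $\mathsf{L}_\mathsf{F}\mathsf{K}_\mathsf{F}$, both purifications of $\rho$, then there exists a fermionic channel $\mathcal{V}$ from $\mathsf{M}_\mathsf{F}$ to $\mathsf{K}_\mathsf{F}$ such that $(\mathcal{I}_{\mathsf{L}_\mathsf{F}}\boxtimes\mathcal{V})(\Psi_\rho)=\Phi_\rho$.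
   Context: A system $\mathsf{L}_\mathsf{F}$ of $L$ local fermionic modes (LFMs) is described by field operators $\varphi_1,\dots,\varphi_L$ with $\{\varphi_i,\varphi_j^\dagger\}=\delta_{ij}I$, $\{\varphi_i,\varphi_j\}=0$. The vacuum $|\Omega\rangle$ is the common $0$-eigenvector of all $\varphi_i^\dagger\varphi_i$; the Fock basis $|n_1,\dots,n_L\rangle=(\varphi_1^\dagger)^{n_1}\cdots(\varphi_L^\dagger)^{n_L}|\Omega\rangle$ spans the Fock space. Identifying it with the computational basis of $L$ qubits gives the Jordan–Wigner isomorphism $J$ (depending on an ordering of the modes): $J(\varphi_i)=(\bigotimes_{l<i}\sigma^z_l)\otimes\sigma^-_i\otimes(\bigotimes_{k>i}I_k)$, extended linearly and multiplicatively with $J(X^\dagger)=J(X)^\dagger$. The Fock space splits into even and odd total occupation number subspaces. Fermionic states: linear combinations of products of an even number of field operators with $J(\rho)=\rho_e+\rho_o$, $\rho_e,\rho_o\geq0$ supported on the even/odd subspaces, trace $\le 1$; pure states are those with rank-one representative. $\mathsf{L}_\mathsf{F}\mathsf{M}_\mathsf{F}$ (also written $\mathsf{L}_\mathsf{F}\boxtimes\mathsf{M}_\mathsf{F}$) is the system of $L+M$ LFMs. The fermionic partial trace $\operatorname{Tr}^f_{\mathsf{M}_\mathsf{F}}$ drops every term containing an odd number of field operators of some mode of $\mathsf{M}_\mathsf{F}$ and removes the $\mathsf{M}_\mathsf{F}$ field operators from the remaining terms. Fermionic transformations are completely positive maps (in the Jordan–Wigner representation) whose Kraus operators are each linear combinations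 of products of field operators with all an even or all an odd number of factors; channels are trace-preserving transformations. $\mathcal{C}\boxtimes\mathcal{D}$ denotes parallel composition (Kraus operators $\{C_iD_j\}$), and $\mathcal{I}_{\mathsf{L}_\mathsf{F}}$ the identity channel on $\mathsf{L}_\mathsf{F}$. *)

theory Defs
  imports Complex_Main "Jordan_Normal_Form.Matrix"
begin

text \<open>Jordan-Wigner representation. A system of N local fermionic modes is represented on
  N qubits, i.e. on complex 2^N x 2^N matrices. Basis index i < 2^N encodes the occupation
  numbers (n_1,...,n_N) in binary with n_1 the most significant bit, so that for the composite
  system of L+M modes (modes of the first system ordered first) the index is i_L * 2^M + i_M.\<close>

definition bitcount :: "nat \<Rightarrow> nat" where
  "bitcount n = (\<Sum>k<n. if bit n k then 1 else 0)"

definition even_occ :: "nat \<Rightarrow> bool" where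
  "even_occ i \<longleftrightarrow> even (bitcount i)"

definition psd :: "nat \<Rightarrow> complex mat \<Rightarrow> bool" where
  "psd n A \<longleftrightarrow> A \<in> carrier_mat n n \<and>
     (\<forall>v. dim_vec v = n \<longrightarrow> (let q = (\<Sum>i<n. cnj (v $ i) * (A *\<^sub>v v) $ i) in Im q = 0 \<and> Re q \<ge> 0))"

definition supported_on :: "nat \<Rightarrow> bool \<Rightarrow> complex mat \<Rightarrow> bool" where
  "supported_on n par A \<longleftrightarrow>
     (\<forall>i<n. \<forall>j<n. (even_occ i \<noteq> par \<or> even_occ j \<noteq> par) \<longrightarrow> A $$ (i, j) = 0)"

definition fstate :: "nat \<Rightarrow> complex mat \<Rightarrow> bool" where
  "fstate N \<rho> \<longleftrightarrow> \<rho> \<in> carrier_mat (2^N) (2^N) \<and>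
     (\<exists>\<rho>e \<rho>o. \<rho> = \<rho>e + \<rho>o \<and> psd (2^N) \<rho>e \<and> psd (2^N) \<rho>o \<and>
        supported_on (2^N) True \<rho>e \<and> supported_on (2^N) False \<rho>o) \<and>
     Re (\<Sum>i<2^N. \<rho> $$ (i, i)) \<le> 1"

definition outer :: "complex vec \<Rightarrow> complex mat" where
  "outer v = mat (dim_vec v) (dim_vec v) (\<lambda>(i, j). v $ i * cnj (v $ j))"

definition fpure :: "nat \<Rightarrow> complex mat \<Rightarrow> bool" where
  "fpure N \<Psi> \<longleftrightarrow> fstate N \<Psi> \<and>
     (\<exists>v. dim_vec v = 2^N \<and> v \<noteq> 0\<^sub>v (2^N) \<and> \<Psi> = outer v)"

text \<open>Fermionic partial trace over the modes of M_F in the system L_F M_F (Jordan-Wigner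
  representation, M_F modes ordered after the L_F modes): trace out the last M qubits.\<close>
definition fptrace :: "nat \<Rightarrow> nat \<Rightarrow> complex mat \<Rightarrow> complex mat" where
  "fptrace L M X = mat (2^L) (2^L) (\<lambda>(i, j). \<Sum>k<2^M. X $$ (i * 2^M + k, j * 2^M + k))"

definition kron :: "complex mat \<Rightarrow> complex mat \<Rightarrow> complex mat" where
  "kron A B = mat (dim_row A * dim_row B) (dim_col A * dim_col B)
     (\<lambda>(i, j). A $$ (i div dim_row B, j div dim_col B) * B $$ (i mod dim_row B, j mod dim_col B))"

definition cadj :: "complex mat \<Rightarrow> complex mat" where
  "cadj A = mat (dim_col A) (dim_row A) (\<lambda>(i, j). cnj (A $$ (j, i)))"

definition parity_op :: "nat \<Rightarrow> complex mat" where
  "parity_op N = mat (2^N) (2^N) (\<lambda>(i, j). if i = j then (if even_occ i then 1 else -1) else 0)"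

text \<open>Kraus operator from M modes to K modes that is a combination of products of an even
  (resp. odd) number of field operators: it preserves (resp. flips) the occupation parity.\<close>
definition even_kraus :: "nat \<Rightarrow> nat \<Rightarrow> complex mat \<Rightarrow> bool" where
  "even_kraus M K D \<longleftrightarrow> D \<in> carrier_mat (2^K) (2^M) \<and>
     (\<forall>i<2^K. \<forall>j<2^M. even_occ i \<noteq> even_occ j \<longrightarrow> D $$ (i, j) = 0)"

definition odd_kraus :: "nat \<Rightarrow> nat \<Rightarrow> complex mat \<Rightarrow> bool" where
  "odd_kraus M K D \<longleftrightarrow> D \<in> carrier_mat (2^K) (2^M) \<and>
     (\<forall>i<2^K. \<forall>j<2^M. even_occ i = even_occ j \<longrightarrow> D $$ (i, j) = 0)"

definition fchannel :: "nat \<Rightarrow> nat \<Rightarrow> complex mat list \<Rightarrow> bool" where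
  "fchannel M K Ks \<longleftrightarrow> (\<forall>D\<in>set Ks. even_kraus M K D \<or> odd_kraus M K D) \<and>
     foldr (+) (map (\<lambda>D. cadj D * D) Ks) (0\<^sub>m (2^M) (2^M)) = 1\<^sub>m (2^M)"

definition apply_kraus :: "nat \<Rightarrow> complex mat list \<Rightarrow> complex mat \<Rightarrow> complex mat" where
  "apply_kraus n Ks X = foldr (+) (map (\<lambda>D. D * X * cadj D) Ks) (0\<^sub>m n n)"

text \<open>Kraus operators of the parallel composition I_{L_F} \<boxtimes> V for V from M_F to K_F, in
  the Jordan-Wigner representation of L_F M_F and L_F K_F: an odd operator of the later modes
  picks up the sigma^z string (parity operator) on the L_F modes.\<close>
definition id_par :: "nat \<Rightarrow> nat \<Rightarrow> nat \<Rightarrow> complex mat list \<Rightarrow> complex mat list" where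
  "id_par L M K Ks = map (\<lambda>D. kron (if even_kraus M K D then 1\<^sub>m (2^L) else parity_op L) D) Ks"

end

theory Submission
  imports Defs "Jordan_Normal_Form.Determinant"
begin

text \<open>A Cholesky-type factorization \<open>\<rho> = U U\<^sup>*\<close> with lower triangular \<open>U\<close> whose columns
  respect the parity blocks gives the purification \<open>\<Sum>\<^sub>i\<^sub>,\<^sub>s U\<^sub>i\<^sub>s |i\<rangle>|s\<rangle>\<close> on \<open>L + L\<close>
  modes, which is even because every column of \<open>U\<close> stays in one parity class.

  Conversely, read two purifications \<open>v\<close> and \<open>w\<close> of \<open>\<rho>\<close> as coefficient matrices \<open>A\<close> and \<open>C\<close>;
  then \<open>A A\<^sup>* = \<rho> = C C\<^sup>*\<close>, so a partial isometry \<open>D\<close> of definite parity maps the rows of \<open>A\<close> to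
  those of \<open>C\<close>. Factoring the defect \<open>I - D\<^sup>* D\<close> in the same way yields further Kraus
  operators \<open>|0\<rangle>\<langle>u\<^sub>t|\<close> of definite parity that complete \<open>D\<close> to a fermionic channel and
  annihilate \<open>v\<close>, because \<open>D\<close> is isometric on the rows of \<open>A\<close>.\<close>

section \<open>Hermitian forms on coordinate functions\<close>

definition unit_fun :: "nat \<Rightarrow> nat \<Rightarrow> complex" where
  "unit_fun p i = (if i = p then 1 else 0)"

definition qform :: "nat \<Rightarrow> (nat \<Rightarrow> nat \<Rightarrow> complex) \<Rightarrow> (nat \<Rightarrow> complex) \<Rightarrow> (nat \<Rightarrow> complex) \<Rightarrow> complex"
  where "qform n G x y = (\<Sum>i<n. \<Sum>j<n. cnj (x i) * G i j * y j)"

definition psd_form :: "nat \<Rightarrow> (nat \<Rightarrow> nat \<Rightarrow> complex) \<Rightarrow> bool" where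
  "psd_form n G \<longleftrightarrow> (\<forall>x. Im (qform n G x x) = 0 \<and> 0 \<le> Re (qform n G x x))"

definition block_diagonal :: "(nat \<Rightarrow> 'a) \<Rightarrow> nat \<Rightarrow> (nat \<Rightarrow> nat \<Rightarrow> complex) \<Rightarrow> bool" where
  "block_diagonal \<pi> n G \<longleftrightarrow> (\<forall>i<n. \<forall>j<n. \<pi> i \<noteq> \<pi> j \<longrightarrow> G i j = 0)"

definition cinner :: "nat \<Rightarrow> (nat \<Rightarrow> complex) \<Rightarrow> (nat \<Rightarrow> complex) \<Rightarrow> complex" where
  "cinner m x y = (\<Sum>j<m. cnj (x j) * y j)"

definition gram :: "nat \<Rightarrow> (nat \<Rightarrow> nat \<Rightarrow> complex) \<Rightarrow> nat \<Rightarrow> nat \<Rightarrow> complex" where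
  "gram m B i i' = (\<Sum>j<m. B i j * cnj (B i' j))"

definition adj_apply :: "nat \<Rightarrow> (nat \<Rightarrow> nat \<Rightarrow> complex) \<Rightarrow> (nat \<Rightarrow> complex) \<Rightarrow> nat \<Rightarrow> complex" where
  "adj_apply n B y j = (\<Sum>i<n. cnj (B i j) * y i)"

definition mat_apply :: "nat \<Rightarrow> (nat \<Rightarrow> nat \<Rightarrow> complex) \<Rightarrow> (nat \<Rightarrow> complex) \<Rightarrow> nat \<Rightarrow> complex" where
  "mat_apply m D x l = (\<Sum>j<m. D l j * x j)"

lemma cinner_self: "cinner m x x = of_real (\<Sum>j<m. (cmod (x j))^2)"
  unfolding cinner_def of_real_sum complex_norm_square by (simp add: mult.commute)

lemma cinner_self_eq_0D:
  assumes "cinner m x x = 0" "j < m"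
  shows "x j = 0"
proof -
  have "(\<Sum>j<m. (cmod (x j))^2) = 0"
    using assms(1) unfolding cinner_self by (metis of_real_eq_0_iff)
  then show ?thesis
    using assms(2) by (simp add: sum_nonneg_eq_0_iff)
qed

lemma gram_diagonal_eq_0D: "gram m B i i = 0 \<Longrightarrow> j < m \<Longrightarrow> B i j = 0"
  using cinner_self_eq_0D[of m "B i"] by (simp add: gram_def cinner_def mult.commute)

lemma cnj_cinner: "cnj (cinner m x y) = cinner m y x"
  by (simp add: cinner_def mult.commute)

lemma cinner_sum_left:
  "cinner m (\<lambda>j. \<Sum>s\<in>S. c s * e s j) y = (\<Sum>s\<in>S. cnj (c s) * cinner m (e s) y)"
  by (simp add: cinner_def sum_distrib_left sum_distrib_right algebra_simps sum.swap[of _ S])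

lemma cinner_sum_right:
  "cinner m y (\<lambda>j. \<Sum>s\<in>S. c s * e s j) = (\<Sum>s\<in>S. c s * cinner m y (e s))"
  by (simp add: cinner_def sum_distrib_left sum_distrib_right algebra_simps sum.swap[of _ S])

lemma cinner_diff_left: "cinner m (\<lambda>j. x j - y j) z = cinner m x z - cinner m y z"
  by (simp add: cinner_def algebra_simps sum_subtractf)

lemma cinner_diff_right: "cinner m z (\<lambda>j. x j - y j) = cinner m z x - cinner m z y"
  by (simp add: cinner_def algebra_simps sum_subtractf)

lemma qform_cong:
  "(\<And>i j. i < n \<Longrightarrow> j < n \<Longrightarrow> G i j = H i j) \<Longrightarrow> qform n G x y = qform n H x y"
  by (simp add: qform_def)

lemma qform_combination:
  "qform n G (\<lambda>k. x k + c * y k) (\<lambda>k. x k + c * y k)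
   = qform n G x x + c * qform n G x y + cnj c * qform n G y x + cnj c * c * qform n G y y"
  by (simp add: qform_def algebra_simps sum.distrib sum_distrib_left)

lemma qform_unit_left:
  assumes "p < n"
  shows "qform n G (unit_fun p) y = (\<Sum>j<n. G p j * y j)"
proof -
  have "(\<Sum>j<n. cnj (unit_fun p i) * G i j * y j) = (if i = p then \<Sum>j<n. G p j * y j else 0)" for i
    by (simp add: unit_fun_def)
  then show ?thesis
    using assms by (simp add: qform_def)
qed

lemma qform_unit_right: "p < n \<Longrightarrow> qform n G x (unit_fun p) = (\<Sum>i<n. cnj (x i) * G i p)"
  by (simp add: qform_def unit_fun_def if_distrib cong: if_cong)

lemma qform_unit: "p < n \<Longrightarrow> q < n \<Longrightarrow> qform n G (unit_fun p) (unit_fun q) = G p q"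
  by (simp add: qform_unit_left unit_fun_def if_distrib cong: if_cong)

lemma qform_identity: "qform n (\<lambda>i j. if i = j then 1 else 0) x x = cinner n x x"
proof -
  have "cnj (x i) * (if i = j then 1 else 0) * x j = (if j = i then cnj (x i) * x i else 0)" for i j
    by simp
  then show ?thesis
    by (simp add: qform_def cinner_def)
qed

lemma qform_diff: "qform n (\<lambda>i j. G i j - H i j) x y = qform n G x y - qform n H x y"
  by (simp add: qform_def algebra_simps sum_subtractf)

lemma mat_apply_as_adj_apply: "mat_apply m D x = adj_apply m (\<lambda>j l. cnj (D l j)) x"
  by (simp add: mat_apply_def adj_apply_def fun_eq_iff)

lemma adj_apply_unit: "i < n \<Longrightarrow> adj_apply n B (unit_fun i) j = cnj (B i j)"
  by (simp add: adj_apply_def unit_fun_def if_distrib cong: if_cong)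

lemma adj_apply_diff: "adj_apply n B (\<lambda>i. x i - y i) j = adj_apply n B x j - adj_apply n B y j"
  by (simp add: adj_apply_def algebra_simps sum_subtractf)

lemma adj_apply_sum:
  "adj_apply n B (\<lambda>i. \<Sum>s\<in>S. c s * X s i) j = (\<Sum>s\<in>S. c s * adj_apply n B (X s) j)"
  unfolding adj_apply_def sum_distrib_left by (subst sum.swap) (simp add: algebra_simps)

lemma adj_apply_nonzero:
  assumes "adj_apply n B y j \<noteq> 0"
  obtains i where "i < n" "B i j \<noteq> 0" "y i \<noteq> 0"
  using sum.not_neutral_contains_not_neutral[OF assms[unfolded adj_apply_def]] by auto

lemma cinner_adj_apply: "cinner m (adj_apply n B y) (adj_apply n B z) = qform n (gram m B) y z"
proof -
  have "cinner m (adj_apply n B y) (adj_apply n B z)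
      = (\<Sum>j<m. \<Sum>i<n. \<Sum>i'<n. cnj (y i) * (B i j * cnj (B i' j)) * z i')"
    unfolding cinner_def adj_apply_def cnj_sum sum_product by (simp add: algebra_simps)
  also have "\<dots> = (\<Sum>i<n. \<Sum>i'<n. \<Sum>j<m. cnj (y i) * (B i j * cnj (B i' j)) * z i')"
    by (subst sum.swap) (simp add: sum.swap[of _ "{..<m}"])
  also have "\<dots> = qform n (gram m B) y z"
    by (simp add: qform_def gram_def sum_distrib_left sum_distrib_right)
  finally show ?thesis .
qed

lemma psd_formD:
  assumes "psd_form n G"
  shows "Im (qform n G x x) = 0" "0 \<le> Re (qform n G x x)"
  using assms by (auto simp: psd_form_def)

lemma psd_form_add: "psd_form n F \<Longrightarrow> psd_form n G \<Longrightarrow> psd_form n (\<lambda>i j. F i j + G i j)"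
  by (simp add: psd_form_def qform_def algebra_simps sum.distrib)

lemma psd_form_gram: "psd_form n (gram m B)"
  unfolding psd_form_def cinner_adj_apply[symmetric] cinner_self by (simp add: sum_nonneg)

lemma gram_block_diagonal:
  fixes \<pi> :: "nat \<Rightarrow> bool"
  assumes "\<And>i j. B i j \<noteq> 0 \<Longrightarrow> (\<pi> i = \<pi> j) = a"
  shows "block_diagonal \<pi> n (gram m B)"
  unfolding block_diagonal_def gram_def
proof (intro allI impI sum.neutral ballI)
  fix i i' j assume "\<pi> i \<noteq> \<pi> i'"
  then show "B i j * cnj (B i' j) = 0"
    using assms by (metis complex_cnj_zero mult_eq_0_iff)
qed

lemma psd_form_diagonal:
  assumes "psd_form n G" "p < n"
  shows "Im (G p p) = 0" "0 \<le> Re (G p p)"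
  using psd_formD[OF assms(1), of "unit_fun p"] qform_unit[OF assms(2,2)] by auto

lemma psd_form_hermitian:
  assumes "psd_form n G" "i < n" "j < n"
  shows "G j i = cnj (G i j)"
proof -
  have "Im (G i i + G i j + G j i + G j j) = 0"
    using psd_formD(1)[OF assms(1), of "\<lambda>k. unit_fun i k + 1 * unit_fun j k"]
    unfolding qform_combination by (simp add: qform_unit assms(2,3))
  moreover have "Im (G i i + \<i> * G i j - \<i> * G j i + G j j) = 0"
    using psd_formD(1)[OF assms(1), of "\<lambda>k. unit_fun i k + \<i> * unit_fun j k"]
    unfolding qform_combination by (simp add: qform_unit assms(2,3))
  ultimately show ?thesis
    using psd_form_diagonal(1)[OF assms(1)] assms(2,3) by (simp add: complex_eq_iff)
qed

text \<open>Testing with \<open>e\<^sub>j - t G\<^sub>p\<^sub>j e\<^sub>p\<close> for large \<open>t\<close> makes the form negative unless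
  \<open>G\<^sub>p\<^sub>j = 0\<close>.\<close>
lemma psd_form_zero_diagonal_row:
  assumes "psd_form n G" "p < n" "j < n" "G p p = 0"
  shows "G p j = 0"
proof (rule ccontr)
  let ?b = "G p j"
  assume b: "?b \<noteq> 0"
  define t where "t = (Re (G j j) + 1) / (2 * (cmod ?b)^2)"
  define c where "c = - (complex_of_real t * ?b)"
  have "qform n G (\<lambda>k. unit_fun j k + c * unit_fun p k) (\<lambda>k. unit_fun j k + c * unit_fun p k)
     = G j j + c * cnj ?b + cnj c * ?b"
    using psd_form_hermitian[OF assms(1-3)] assms
    by (simp add: qform_combination qform_unit)
  moreover have "Re (G j j + c * cnj ?b + cnj c * ?b) = Re (G j j) - 2 * t * (cmod ?b)^2"
    unfolding c_def cmod_power2 by (simp add: algebra_simps power2_eq_square)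
  moreover have "Re (G j j) - 2 * t * (cmod ?b)^2 = -1"
    using b by (simp add: t_def field_simps)
  ultimately show False
    using psd_formD(2)[OF assms(1), of "\<lambda>k. unit_fun j k + c * unit_fun p k"] by simp
qed

lemma psd_form_schur_complement:
  assumes "psd_form n G" "p < n" "G p p \<noteq> 0"
  shows "psd_form n (\<lambda>i j. G i j - G i p * G p j / G p p)"
proof -
  have real: "cnj (G p p) = G p p"
    using psd_form_diagonal(1)[OF assms(1,2)] by (simp add: complex_eq_iff)
  have "qform n (\<lambda>i j. G i j - G i p * G p j / G p p) x x
     = qform n G (\<lambda>k. x k + (- (\<beta> / G p p)) * unit_fun p k) (\<lambda>k. x k + (- (\<beta> / G p p)) * unit_fun p k)"
    if \<beta>: "\<beta> = (\<Sum>j<n. G p j * x j)" for x \<beta>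
  proof -
    have left: "qform n G (unit_fun p) x = \<beta>"
      using qform_unit_left[OF assms(2)] \<beta> by simp
    have right: "qform n G x (unit_fun p) = cnj \<beta>"
      using psd_form_hermitian[OF assms(1) _ assms(2)]
      by (auto simp: qform_unit_right[OF assms(2)] \<beta> cnj_sum mult.commute intro!: sum.cong)
    have "qform n (\<lambda>i j. G i j - G i p * G p j / G p p) x x
       = qform n G x x - (\<Sum>i<n. \<Sum>j<n. cnj (x i) * G i p * (G p j * x j)) / G p p"
      by (simp add: qform_def algebra_simps sum_subtractf sum_divide_distrib)
    also have "(\<Sum>i<n. \<Sum>j<n. cnj (x i) * G i p * (G p j * x j))
        = qform n G x (unit_fun p) * qform n G (unit_fun p) x"
      unfolding qform_unit_left[OF assms(2)] qform_unit_right[OF assms(2)] sum_product ..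
    finally have "qform n (\<lambda>i j. G i j - G i p * G p j / G p p) x x
       = qform n G x x - qform n G x (unit_fun p) * qform n G (unit_fun p) x / G p p" .
    moreover have "qform n G (\<lambda>k. x k + (- (\<beta> / G p p)) * unit_fun p k)
        (\<lambda>k. x k + (- (\<beta> / G p p)) * unit_fun p k) = qform n G x x - cnj \<beta> * \<beta> / G p p"
      unfolding qform_combination left right qform_unit[OF assms(2,2)]
      using assms(3) real by (simp add: field_simps)
    ultimately show ?thesis
      by (simp add: left right)
  qed
  then show ?thesis
    using assms(1) by (simp add: psd_form_def)
qed

section \<open>Echelon factorization of positive forms\<close>

text \<open>\<open>u i s\<close> is the entry in row \<open>i\<close> and column \<open>s\<close> of a lower triangular factor \<open>U\<close> of
  \<open>G = U U\<^sup>*\<close>: a column is zero unless its pivot \<open>u s s\<close> is nonzero, and it is supported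
  in the \<open>\<pi>\<close>-class of its index.\<close>
definition echelon_factor :: "(nat \<Rightarrow> 'a) \<Rightarrow> nat \<Rightarrow> (nat \<Rightarrow> nat \<Rightarrow> complex) \<Rightarrow> bool" where
  "echelon_factor \<pi> n u \<longleftrightarrow> (\<forall>i s. u i s \<noteq> 0 \<longrightarrow> s \<le> i \<and> i < n \<and> \<pi> i = \<pi> s \<and> u s s \<noteq> 0)"

lemma schur_complement_block_diagonal:
  assumes "block_diagonal \<pi> n G" "p < n"
  shows "block_diagonal \<pi> n (\<lambda>i j. G i j - G i p * G p j / G p p)"
  unfolding block_diagonal_def
proof (intro allI impI)
  fix i j assume "i < n" "j < n" "\<pi> i \<noteq> \<pi> j"
  then have "G i j = 0"
    using assms(1) unfolding block_diagonal_def by blast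
  moreover have "G i p = 0 \<or> G p j = 0"
  proof -
    have "\<pi> i \<noteq> \<pi> p \<or> \<pi> p \<noteq> \<pi> j"
      using \<open>\<pi> i \<noteq> \<pi> j\<close> by auto
    then show ?thesis
      using assms \<open>i < n\<close> \<open>j < n\<close> unfolding block_diagonal_def by blast
  qed
  ultimately show "G i j - G i p * G p j / G p p = 0"
    by auto
qed

lemma psd_form_pivot_column:
  assumes "psd_form n G" "block_diagonal \<pi> n G" "p < n" "G p p \<noteq> 0"
    and above: "\<And>i. i < p \<Longrightarrow> G i p = 0"
  obtains w where "\<And>i j. i < n \<Longrightarrow> j < n \<Longrightarrow> G i p * G p j / G p p = w i * cnj (w j)"
    and "\<And>i. w i \<noteq> 0 \<Longrightarrow> p \<le> i \<and> i < n \<and> \<pi> i = \<pi> p" and "w p \<noteq> 0"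
proof -
  define r where "r = sqrt (Re (G p p))"
  have "0 < Re (G p p)"
    using psd_form_diagonal[OF assms(1,3)] assms(4) by (simp add: complex_eq_iff order_le_less)
  then have r: "r \<noteq> 0" and rr: "complex_of_real r * complex_of_real r = G p p"
    using psd_form_diagonal(1)[OF assms(1,3)] unfolding r_def
    by (auto simp: complex_eq_iff simp flip: of_real_mult)
  define w where "w i = (if i < n then G i p / complex_of_real r else 0)" for i
  show ?thesis
  proof
    fix i j assume "i < n" "j < n"
    then show "G i p * G p j / G p p = w i * cnj (w j)"
      using psd_form_hermitian[OF assms(1) _ assms(3), of j] rr by (simp add: w_def)
  next
    fix i assume "w i \<noteq> 0"
    then have "i < n" "G i p \<noteq> 0"
      by (auto simp: w_def split: if_splits)
    then show "p \<le> i \<and> i < n \<and> \<pi> i = \<pi> p"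
      using above assms(2,3) unfolding block_diagonal_def by (meson not_le)
  next
    show "w p \<noteq> 0"
      using assms(3,4) r by (simp add: w_def)
  qed
qed

lemma psd_form_zero_pivot:
  assumes "psd_form n G" "p < n" "G p p = 0"
    and vanishing: "\<And>i j. i < n \<Longrightarrow> j < n \<Longrightarrow> i < p \<or> j < p \<Longrightarrow> G i j = 0"
    and ij: "i < n" "j < n" "i < Suc p \<or> j < Suc p"
  shows "G i j = 0"
proof -
  consider "i < p \<or> j < p" | "i = p" | "j = p"
    using ij(3) by linarith
  then show ?thesis
  proof cases
    case 1
    then show ?thesis
      using vanishing ij(1,2) by blast
  next
    case 2
    then show ?thesis
      using psd_form_zero_diagonal_row[OF assms(1,2) ij(2) assms(3)] by simp
  next
    case 3
    then show ?thesis
      using psd_form_zero_diagonal_row[OF assms(1,2) ij(1) assms(3)]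
        psd_form_hermitian[OF assms(1,2) ij(1)] by simp
  qed
qed

lemma schur_complement_vanishing_prefix:
  fixes G :: "nat \<Rightarrow> nat \<Rightarrow> complex"
  assumes "G p p \<noteq> 0" "p < n"
    and vanishing: "\<And>i j. i < n \<Longrightarrow> j < n \<Longrightarrow> i < p \<or> j < p \<Longrightarrow> G i j = 0"
    and ij: "i < n" "j < n" "i < Suc p \<or> j < Suc p"
  shows "G i j - G i p * G p j / G p p = 0"
proof -
  consider "i < p" | "j < p" | "i = p" | "j = p"
    using ij(3) by linarith
  then show ?thesis
    using vanishing[of i j] vanishing[of i p] vanishing[of p j] ij(1,2) assms(1,2) by cases auto
qed

lemma echelon_factor_add_column:
  assumes u: "echelon_factor \<pi> n u" and "u p p = 0"
    and w: "\<And>i. w i \<noteq> 0 \<Longrightarrow> p \<le> i \<and> i < n \<and> \<pi> i = \<pi> p" "w p \<noteq> 0"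
  shows "echelon_factor \<pi> n (\<lambda>i s. if s = p then w i else u i s)"
    and "p < n \<Longrightarrow> gram n (\<lambda>i s. if s = p then w i else u i s) i j = gram n u i j + w i * cnj (w j)"
proof -
  have column_p: "u i p = 0" for i
    using u \<open>u p p = 0\<close> unfolding echelon_factor_def by blast
  show "echelon_factor \<pi> n (\<lambda>i s. if s = p then w i else u i s)"
    unfolding echelon_factor_def
  proof (intro allI impI)
    fix i s assume "(if s = p then w i else u i s) \<noteq> 0"
    then show "s \<le> i \<and> i < n \<and> \<pi> i = \<pi> s \<and> (if s = p then w s else u s s) \<noteq> 0"
      using u w(1)[of i] w(2) by (cases "s = p") (simp_all add: echelon_factor_def)
  qed
  assume "p < n"
  have "(if s = p then w i else u i s) * cnj (if s = p then w j else u j s)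
      = u i s * cnj (u j s) + (if s = p then w i * cnj (w j) else 0)" for s
    by (simp add: column_p)
  then show "gram n (\<lambda>i s. if s = p then w i else u i s) i j = gram n u i j + w i * cnj (w j)"
    using \<open>p < n\<close> by (simp add: gram_def sum.distrib)
qed

lemma psd_form_echelon_pivot_step:
  assumes G: "psd_form n G" "block_diagonal \<pi> n G" and p: "p < n" "G p p \<noteq> 0"
    and vanishing: "\<And>i j. i < n \<Longrightarrow> j < n \<Longrightarrow> i < p \<or> j < p \<Longrightarrow> G i j = 0"
    and u: "echelon_factor \<pi> n u"
    and schur: "\<And>i j. i < n \<Longrightarrow> j < n \<Longrightarrow> G i j - G i p * G p j / G p p = gram n u i j"
  shows "\<exists>u'. echelon_factor \<pi> n u' \<and> (\<forall>i<n. \<forall>j<n. G i j = gram n u' i j)"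
proof -
  obtain w where w: "\<And>i j. i < n \<Longrightarrow> j < n \<Longrightarrow> G i p * G p j / G p p = w i * cnj (w j)"
    and w_echelon: "\<And>i. w i \<noteq> 0 \<Longrightarrow> p \<le> i \<and> i < n \<and> \<pi> i = \<pi> p" "w p \<noteq> 0"
    using psd_form_pivot_column[OF G p] vanishing p(1) less_trans by blast
  have "gram n u p p = 0"
    using schur[OF p(1) p(1)] p(2) by simp
  then have "u p p = 0"
    using gram_diagonal_eq_0D[of n u p p] p(1) by simp
  have "echelon_factor \<pi> n (\<lambda>i s. if s = p then w i else u i s)"
    using w_echelon by (rule echelon_factor_add_column(1)[OF u \<open>u p p = 0\<close>])
  moreover have "G i j = gram n (\<lambda>i s. if s = p then w i else u i s) i j" if "i < n" "j < n" for i j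
  proof -
    have "gram n (\<lambda>i s. if s = p then w i else u i s) i j = gram n u i j + w i * cnj (w j)"
      using w_echelon p(1) by (rule echelon_factor_add_column(2)[OF u \<open>u p p = 0\<close>])
    then show ?thesis
      using schur[OF that] w[OF that] by (simp add: diff_eq_eq)
  qed
  ultimately show ?thesis
    by blast
qed

lemma psd_form_echelon_factorization_vanishing_prefix:
  assumes "psd_form n G" "block_diagonal \<pi> n G"
    and "\<And>i j. i < n \<Longrightarrow> j < n \<Longrightarrow> i < p \<or> j < p \<Longrightarrow> G i j = 0"
  shows "\<exists>u. echelon_factor \<pi> n u \<and> (\<forall>i<n. \<forall>j<n. G i j = gram n u i j)"
  using assms
proof (induction "n - p" arbitrary: G p)
  case 0
  then show ?case
    by (intro exI[of _ "\<lambda>i s. 0"]) (auto simp: echelon_factor_def gram_def)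
next
  case (Suc d)
  then have p: "p < n" and d: "d = n - Suc p"
    by auto
  show ?case
  proof (cases "G p p = 0")
    case True
    then show ?thesis
      using Suc.hyps(1)[OF d Suc.prems(1,2)] psd_form_zero_pivot[OF Suc.prems(1) p True Suc.prems(3)]
      by blast
  next
    case False
    have "G i j - G i p * G p j / G p p = 0" if "i < n" "j < n" "i < Suc p \<or> j < Suc p" for i j
      using False p Suc.prems(3) that by (rule schur_complement_vanishing_prefix)
    then obtain u where "echelon_factor \<pi> n u"
      and "\<forall>i<n. \<forall>j<n. G i j - G i p * G p j / G p p = gram n u i j"
      using Suc.hyps(1)[OF d psd_form_schur_complement[OF Suc.prems(1) p False]
          schur_complement_block_diagonal[OF Suc.prems(2) p]] by blast
    then show ?thesis
      using psd_form_echelon_pivot_step[OF Suc.prems(1,2) p False Suc.prems(3)] by blast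
  qed
qed

lemma psd_form_echelon_factorization:
  assumes "psd_form n G" "block_diagonal \<pi> n G"
  obtains u where "echelon_factor \<pi> n u" "\<And>i j. i < n \<Longrightarrow> j < n \<Longrightarrow> G i j = gram n u i j"
  using psd_form_echelon_factorization_vanishing_prefix[OF assms, of 0] by auto

lemma echelon_factor_adjoint_solve:
  assumes u: "echelon_factor \<pi> n u" and s: "s < n"
  obtains y where "\<And>r. r < n \<Longrightarrow> u r r \<noteq> 0 \<Longrightarrow> adj_apply n u y r = (if r = s then 1 else 0)"
proof -
  define T :: "complex mat" where
    "T = mat n n (\<lambda>(r, i). if u r r \<noteq> 0 then cnj (u i r) else (if r = i then 1 else 0))"
  have T: "T \<in> carrier_mat n n"
    by (simp add: T_def)
  have "upper_triangular T"
    using u unfolding upper_triangular_def T_def echelon_factor_def by (auto simp: not_le[symmetric])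
  then have "det T = prod_list (diag_mat T)"
    using det_upper_triangular T by blast
  also have "\<dots> \<noteq> 0"
    unfolding prod_list_zero_iff diag_mat_def T_def by auto
  finally obtain B where B: "B \<in> carrier_mat n n" and "T * B = 1\<^sub>m n"
    using det_non_zero_imp_unit[OF T, of undefined] by (auto simp: Units_def ring_mat_def)
  then have Ty: "T *\<^sub>v (B *\<^sub>v unit_vec n s) = unit_vec n s"
    using T by (metis assoc_mult_mat_vec one_mult_mat_vec unit_vec_carrier)
  show ?thesis
  proof (rule that)
    fix r assume "r < n" "u r r \<noteq> 0"
    then show "adj_apply n u (\<lambda>i. (B *\<^sub>v unit_vec n s) $ i) r = (if r = s then 1 else 0)"
      using arg_cong[OF Ty, of "\<lambda>y. y $ r"] s T B
      by (simp add: T_def adj_apply_def scalar_prod_def atLeast0LessThan)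
  qed
qed

lemma echelon_dual_vector:
  assumes u: "echelon_factor \<pi> n u" and s: "s < n" "u s s \<noteq> 0"
  obtains x where "\<And>r. r < n \<Longrightarrow> adj_apply n u x r = (if r = s then 1 else 0)"
    and "\<And>i. x i \<noteq> 0 \<Longrightarrow> \<pi> i = \<pi> s"
proof -
  obtain y where y: "\<And>r. r < n \<Longrightarrow> u r r \<noteq> 0 \<Longrightarrow> adj_apply n u y r = (if r = s then 1 else 0)"
    using echelon_factor_adjoint_solve[OF u s(1)] by blast
  define x where "x i = (if \<pi> i = \<pi> s then y i else 0)" for i
  have restricted: "adj_apply n u x r = (if \<pi> r = \<pi> s then adj_apply n u y r else 0)" for r
  proof -
    have other_class: "u i r = 0" if "\<pi> i \<noteq> \<pi> r" for i
      using u that unfolding echelon_factor_def by metis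
    then show ?thesis
      unfolding adj_apply_def x_def by (auto intro!: sum.cong sum.neutral)
  qed
  show ?thesis
  proof
    fix r assume r: "r < n"
    show "adj_apply n u x r = (if r = s then 1 else 0)"
    proof (cases "u r r = 0")
      case True
      then have "u i r = 0" for i
        using u unfolding echelon_factor_def by blast
      then show ?thesis
        using True s(2) by (auto simp: adj_apply_def)
    next
      case False
      then show ?thesis
        using restricted y[OF r False] by auto
    qed
  next
    fix i assume "x i \<noteq> 0"
    then show "\<pi> i = \<pi> s"
      by (auto simp: x_def split: if_splits)
  qed
qed

lemma echelon_dual_family:
  assumes "echelon_factor \<pi> n u"
  obtains X where
    "\<And>s r. s < n \<Longrightarrow> u s s \<noteq> 0 \<Longrightarrow> r < n \<Longrightarrow> adj_apply n u (X s) r = (if r = s then 1 else 0)"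
    "\<And>s i. X s i \<noteq> 0 \<Longrightarrow> \<pi> i = \<pi> s"
proof -
  define Q where "Q s x \<longleftrightarrow>
    (s < n \<and> u s s \<noteq> 0 \<longrightarrow> (\<forall>r<n. adj_apply n u x r = (if r = s then 1 else 0)))
    \<and> (\<forall>i. x i \<noteq> 0 \<longrightarrow> \<pi> i = \<pi> s)" for s x
  have "\<exists>x. Q s x" for s
  proof (cases "s < n \<and> u s s \<noteq> 0")
    case True
    then obtain x where "\<And>r. r < n \<Longrightarrow> adj_apply n u x r = (if r = s then 1 else 0)"
      and "\<And>i. x i \<noteq> 0 \<Longrightarrow> \<pi> i = \<pi> s"
      using echelon_dual_vector[OF assms, of s] by blast
    then have "Q s x"
      unfolding Q_def by simp
    then show ?thesis
      by blast
  next
    case False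
    then have "Q s (\<lambda>i. 0)"
      unfolding Q_def by auto
    then show ?thesis
      by blast
  qed
  then obtain X where "Q s (X s)" for s
    using choice[of Q] by blast
  then show ?thesis
    using that unfolding Q_def by blast
qed

section \<open>Orthonormal families and transfer operators\<close>

definition orthonormal_on :: "nat \<Rightarrow> 'a set \<Rightarrow> ('a \<Rightarrow> nat \<Rightarrow> complex) \<Rightarrow> bool" where
  "orthonormal_on m S e \<longleftrightarrow> (\<forall>s\<in>S. \<forall>t\<in>S. cinner m (e s) (e t) = (if s = t then 1 else 0))"

lemma orthonormal_on_cnj:
  assumes "orthonormal_on m S e"
  shows "orthonormal_on m S (\<lambda>s j. cnj (e s j))"
proof -
  have "cinner m (\<lambda>j. cnj (e s j)) (\<lambda>j. cnj (e t j)) = cnj (cinner m (e s) (e t))" for s t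
    by (simp add: cinner_def)
  then show ?thesis
    using assms unfolding orthonormal_on_def by simp
qed

lemma cinner_orthonormal_right:
  assumes "finite S" "orthonormal_on m S e" "t \<in> S"
  shows "cinner m (\<lambda>j. \<Sum>s\<in>S. c s * e s j) (e t) = cnj (c t)"
proof -
  have "(\<Sum>s\<in>S. cnj (c s) * cinner m (e s) (e t)) = (\<Sum>s\<in>S. if s = t then cnj (c s) else 0)"
    using assms(2,3) unfolding orthonormal_on_def by (intro sum.cong) auto
  then show ?thesis
    using assms(1,3) by (simp add: cinner_sum_left)
qed

lemma cinner_orthonormal_combination:
  assumes "finite S" "orthonormal_on m S e"
  shows "cinner m (\<lambda>j. \<Sum>s\<in>S. c s * e s j) (\<lambda>j. \<Sum>s\<in>S. d s * e s j) = (\<Sum>s\<in>S. cnj (c s) * d s)"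
  unfolding cinner_sum_right using cinner_orthonormal_right[OF assms]
  by (simp add: mult.commute)

lemma bessel_inequality:
  assumes "finite S" "orthonormal_on m S e"
  shows "Re (\<Sum>s\<in>S. cnj (cinner m (e s) x) * cinner m (e s) x) \<le> Re (cinner m x x)"
proof -
  define c where "c s = cinner m (e s) x" for s
  define y where "y j = x j - (\<Sum>s\<in>S. c s * e s j)" for j
  have "cinner m x (e s) = cnj (c s)" for s
    by (simp add: c_def cnj_cinner)
  then have "cinner m x (\<lambda>j. \<Sum>s\<in>S. c s * e s j) = (\<Sum>s\<in>S. cnj (c s) * c s)"
    unfolding cinner_sum_right by (simp add: mult.commute)
  moreover have "cinner m (\<lambda>j. \<Sum>s\<in>S. c s * e s j) x = (\<Sum>s\<in>S. cnj (c s) * c s)"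
    unfolding cinner_sum_left c_def ..
  ultimately have "cinner m y y = cinner m x x - (\<Sum>s\<in>S. cnj (c s) * c s)"
    unfolding y_def cinner_diff_left cinner_diff_right cinner_orthonormal_combination[OF assms]
    by simp
  moreover have "0 \<le> Re (cinner m y y)"
    unfolding cinner_self by (simp add: sum_nonneg)
  ultimately show ?thesis
    by (simp add: c_def)
qed

definition transfer_op :: "'a set \<Rightarrow> ('a \<Rightarrow> nat \<Rightarrow> complex) \<Rightarrow> ('a \<Rightarrow> nat \<Rightarrow> complex) \<Rightarrow> nat \<Rightarrow> nat \<Rightarrow> complex"
  where "transfer_op S f g l j = (\<Sum>s\<in>S. g s l * cnj (f s j))"

lemma mat_apply_transfer_op:
  "mat_apply m (transfer_op S f g) x = (\<lambda>l. \<Sum>s\<in>S. cinner m (f s) x * g s l)"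
  unfolding mat_apply_def transfer_op_def cinner_def sum_distrib_left sum_distrib_right
  by (subst sum.swap) (simp add: algebra_simps)

lemma transfer_op_contraction:
  assumes "finite S" "orthonormal_on m S f" "orthonormal_on k S g"
  shows "Re (cinner k (mat_apply m (transfer_op S f g) x) (mat_apply m (transfer_op S f g) x))
    \<le> Re (cinner m x x)"
  unfolding mat_apply_transfer_op cinner_orthonormal_combination[OF assms(1,3)]
  using bessel_inequality[OF assms(1,2)] .

lemma transfer_op_intertwines:
  assumes "finite S" "orthonormal_on m S f"
    and x: "\<And>j. j < m \<Longrightarrow> x j = (\<Sum>s\<in>S. c s * f s j)"
  shows "mat_apply m (transfer_op S f g) x l = (\<Sum>s\<in>S. c s * g s l)"
proof -
  have "cinner m (f s) x = c s" if "s \<in> S" for s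
  proof -
    have "cinner m (f s) x = cinner m (f s) (\<lambda>j. \<Sum>t\<in>S. c t * f t j)"
      unfolding cinner_def using x by (intro sum.cong) auto
    also have "\<dots> = cnj (cinner m (\<lambda>j. \<Sum>t\<in>S. c t * f t j) (f s))"
      by (simp add: cnj_cinner)
    finally show ?thesis
      using cinner_orthonormal_right[OF assms(1,2) that] by simp
  qed
  then show ?thesis
    unfolding mat_apply_transfer_op by (intro sum.cong) simp_all
qed

section \<open>Factors with equal Gram matrices\<close>

lemma cinner_adj_apply_gram_eq:
  assumes "\<And>i i'. i < n \<Longrightarrow> i' < n \<Longrightarrow> gram m B i i' = gram n u i i'"
  shows "cinner m (adj_apply n B y) (adj_apply n B z) = cinner n (adj_apply n u y) (adj_apply n u z)"
  unfolding cinner_adj_apply using assms by (rule qform_cong)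

lemma adj_apply_dual_orthonormal:
  assumes gram: "\<And>i i'. i < n \<Longrightarrow> i' < n \<Longrightarrow> gram m B i i' = gram n u i i'"
    and dual: "\<And>s r. s \<in> S \<Longrightarrow> r < n \<Longrightarrow> adj_apply n u (X s) r = (if r = s then 1 else 0)"
    and "S \<subseteq> {..<n}"
  shows "orthonormal_on m S (\<lambda>s. adj_apply n B (X s))"
  unfolding orthonormal_on_def
proof (intro ballI)
  fix s t assume st: "s \<in> S" "t \<in> S"
  have "cinner m (adj_apply n B (X s)) (adj_apply n B (X t))
      = cinner n (adj_apply n u (X s)) (adj_apply n u (X t))"
    by (rule cinner_adj_apply_gram_eq[OF gram])
  also have "\<dots> = (\<Sum>r<n. if r = s then (if s = t then 1 else 0) else 0)"
    unfolding cinner_def using dual st by (intro sum.cong) auto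
  also have "\<dots> = (if s = t then 1 else 0)"
    using st assms(3) by auto
  finally show "cinner m (adj_apply n B (X s)) (adj_apply n B (X t)) = (if s = t then 1 else 0)" .
qed

lemma adj_apply_dual_expansion:
  assumes gram: "\<And>i i'. i < n \<Longrightarrow> i' < n \<Longrightarrow> gram m B i i' = gram n u i i'"
    and u: "echelon_factor \<pi> n u"
    and dual: "\<And>s r. s \<in> S \<Longrightarrow> r < n \<Longrightarrow> adj_apply n u (X s) r = (if r = s then 1 else 0)"
    and S: "S = {s. s < n \<and> u s s \<noteq> 0}" and i: "i < n" and j: "j < m"
  shows "B i j = (\<Sum>s\<in>S. u i s * cnj (adj_apply n B (X s) j))"
proof -
  define d where "d i' = unit_fun i i' - (\<Sum>s\<in>S. cnj (u i s) * X s i')" for i'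
  have d_coordinates: "adj_apply n u d r = 0" if r: "r < n" for r
  proof -
    have "adj_apply n u d r = cnj (u i r) - (\<Sum>s\<in>S. cnj (u i s) * adj_apply n u (X s) r)"
      unfolding d_def adj_apply_diff adj_apply_sum adj_apply_unit[OF i] ..
    also have "(\<Sum>s\<in>S. cnj (u i s) * adj_apply n u (X s) r) = (\<Sum>s\<in>S. if s = r then cnj (u i r) else 0)"
      using dual r by (intro sum.cong) auto
    also have "\<dots> = cnj (u i r)"
      using S u r unfolding echelon_factor_def by auto
    finally show ?thesis
      by simp
  qed
  have "cinner m (adj_apply n B d) (adj_apply n B d) = cinner n (adj_apply n u d) (adj_apply n u d)"
    by (rule cinner_adj_apply_gram_eq[OF gram])
  also have "\<dots> = 0"
    using d_coordinates by (simp add: cinner_def)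
  finally have "adj_apply n B d j = 0"
    using cinner_self_eq_0D j by blast
  then have "cnj (B i j) = (\<Sum>s\<in>S. cnj (u i s) * adj_apply n B (X s) j)"
    unfolding d_def adj_apply_diff adj_apply_sum adj_apply_unit[OF i] by simp
  from arg_cong[OF this, of cnj] show ?thesis
    by simp
qed

lemma transfer_op_dual_parity:
  fixes \<pi> :: "nat \<Rightarrow> bool"
  assumes "transfer_op S (\<lambda>s j. cnj (adj_apply n A (X s) j)) (\<lambda>s l. cnj (adj_apply n C (X s) l)) l j \<noteq> 0"
    and X_class: "\<And>s i. X s i \<noteq> 0 \<Longrightarrow> \<pi> i = \<pi> s"
    and parity_A: "\<And>i j. A i j \<noteq> 0 \<Longrightarrow> (\<pi> i = \<pi> j) = a"
    and parity_C: "\<And>i l. C i l \<noteq> 0 \<Longrightarrow> (\<pi> i = \<pi> l) = c"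
  shows "(\<pi> l = \<pi> j) = (a = c)"
proof -
  obtain s where "cnj (adj_apply n C (X s) l) * cnj (cnj (adj_apply n A (X s) j)) \<noteq> 0"
    using sum.not_neutral_contains_not_neutral[OF assms(1)[unfolded transfer_op_def]] by blast
  then have "adj_apply n C (X s) l \<noteq> 0" "adj_apply n A (X s) j \<noteq> 0"
    by auto
  obtain i where "C i l \<noteq> 0" "X s i \<noteq> 0"
    using adj_apply_nonzero \<open>adj_apply n C (X s) l \<noteq> 0\<close> by blast
  then have "(\<pi> s = \<pi> l) = c"
    using parity_C X_class by metis
  moreover obtain i' where "A i' j \<noteq> 0" "X s i' \<noteq> 0"
    using adj_apply_nonzero \<open>adj_apply n A (X s) j \<noteq> 0\<close> by blast
  then have "(\<pi> s = \<pi> j) = a"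
    using parity_A X_class by metis
  ultimately show ?thesis
    by auto
qed

text \<open>\<open>D\<close> is the partial isometry carrying the rows of \<open>A\<close> to those of \<open>C\<close>. It is assembled
  from the images under \<open>A\<^sup>*\<close> and \<open>C\<^sup>*\<close> of the dual basis of an echelon factor of the common Gram
  matrix, which are orthonormal families.\<close>
lemma gram_intertwiner:
  fixes \<pi> :: "nat \<Rightarrow> bool"
  assumes gram_eq: "\<And>i i'. i < n \<Longrightarrow> i' < n \<Longrightarrow> gram m A i i' = gram k C i i'"
    and parity_A: "\<And>i j. A i j \<noteq> 0 \<Longrightarrow> (\<pi> i = \<pi> j) = a"
    and parity_C: "\<And>i l. C i l \<noteq> 0 \<Longrightarrow> (\<pi> i = \<pi> l) = c"
  obtains D where "\<And>i l. i < n \<Longrightarrow> l < k \<Longrightarrow> mat_apply m D (A i) l = C i l"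
    and "\<And>x. Re (cinner k (mat_apply m D x) (mat_apply m D x)) \<le> Re (cinner m x x)"
    and "\<And>l j. D l j \<noteq> 0 \<Longrightarrow> (\<pi> l = \<pi> j) = (a = c)"
proof -
  have "block_diagonal \<pi> n (gram m A)"
    using parity_A by (rule gram_block_diagonal)
  then obtain u where u: "echelon_factor \<pi> n u"
    and gram_A: "\<And>i i'. i < n \<Longrightarrow> i' < n \<Longrightarrow> gram m A i i' = gram n u i i'"
    using psd_form_echelon_factorization[OF psd_form_gram] by blast
  have gram_C: "gram k C i i' = gram n u i i'" if "i < n" "i' < n" for i i'
    using gram_A gram_eq that by simp
  obtain X where dual: "\<And>s r. s < n \<Longrightarrow> u s s \<noteq> 0 \<Longrightarrow> r < n \<Longrightarrow> adj_apply n u (X s) r = (if r = s then 1 else 0)"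
    and X_class: "\<And>s i. X s i \<noteq> 0 \<Longrightarrow> \<pi> i = \<pi> s"
    using echelon_dual_family[OF u] by blast
  define S where "S = {s. s < n \<and> u s s \<noteq> 0}"
  have S: "finite S" "S \<subseteq> {..<n}"
    by (auto simp: S_def)
  have dual_S: "\<And>s r. s \<in> S \<Longrightarrow> r < n \<Longrightarrow> adj_apply n u (X s) r = (if r = s then 1 else 0)"
    using dual by (simp add: S_def)
  define f where "f s j = cnj (adj_apply n A (X s) j)" for s j
  define g where "g s l = cnj (adj_apply n C (X s) l)" for s l
  have orth_f: "orthonormal_on m S f"
    unfolding f_def by (intro orthonormal_on_cnj adj_apply_dual_orthonormal[OF gram_A dual_S S(2)])
  have orth_g: "orthonormal_on k S g"
    unfolding g_def by (intro orthonormal_on_cnj adj_apply_dual_orthonormal[OF gram_C dual_S S(2)])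
  show ?thesis
  proof
    fix i l assume il: "i < n" "l < k"
    have "A i j = (\<Sum>s\<in>S. u i s * f s j)" if "j < m" for j
      using adj_apply_dual_expansion[OF gram_A u dual_S S_def il(1) that] by (simp add: f_def)
    then have "mat_apply m (transfer_op S f g) (A i) l = (\<Sum>s\<in>S. u i s * g s l)"
      by (rule transfer_op_intertwines[OF S(1) orth_f])
    also have "\<dots> = C i l"
      using adj_apply_dual_expansion[OF gram_C u dual_S S_def il] by (simp add: g_def)
    finally show "mat_apply m (transfer_op S f g) (A i) l = C i l" .
  next
    fix x
    show "Re (cinner k (mat_apply m (transfer_op S f g) x) (mat_apply m (transfer_op S f g) x))
      \<le> Re (cinner m x x)"
      by (rule transfer_op_contraction[OF S(1) orth_f orth_g])
  next
    fix l j assume "transfer_op S f g l j \<noteq> 0"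
    then show "(\<pi> l = \<pi> j) = (a = c)"
      unfolding f_def g_def using X_class parity_A parity_C by (rule transfer_op_dual_parity)
  qed
qed

lemma gram_parity_twist:
  fixes \<pi> :: "nat \<Rightarrow> bool"
  assumes "\<And>i l. C i l \<noteq> 0 \<Longrightarrow> (\<pi> i = \<pi> l) = p"
  shows "gram k (\<lambda>i l. (if b \<or> \<pi> i then 1 else -1) * C i l) i i' = gram k C i i'"
proof (cases "b \<or> \<pi> i = \<pi> i'")
  case True
  then show ?thesis
    by (auto simp: gram_def intro!: sum.cong)
next
  case False
  then have "C i l = 0 \<or> C i' l = 0" for l
    using assms by metis
  then have "gram k C i i' = 0" "gram k (\<lambda>i l. (if b \<or> \<pi> i then 1 else -1) * C i l) i i' = 0"
    unfolding gram_def by (intro sum.neutral ballI, metis complex_cnj_zero mult_zero_left mult_zero_right)+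
  then show ?thesis
    by simp
qed

text \<open>The sign is the one picked up by the parity string in \<^const>\<open>id_par\<close> when \<open>D\<close> is odd.\<close>
lemma signed_gram_intertwiner:
  fixes \<pi> :: "nat \<Rightarrow> bool"
  assumes gram_eq: "\<And>i i'. i < n \<Longrightarrow> i' < n \<Longrightarrow> gram m A i i' = gram k C i i'"
    and parity_A: "\<And>i j. A i j \<noteq> 0 \<Longrightarrow> (\<pi> i = \<pi> j) = a"
    and parity_C: "\<And>i l. C i l \<noteq> 0 \<Longrightarrow> (\<pi> i = \<pi> l) = c"
  obtains D where "\<And>i l. i < n \<Longrightarrow> l < k \<Longrightarrow> mat_apply m D (A i) l = (if a = c \<or> \<pi> i then 1 else -1) * C i l"
    and "\<And>x. Re (cinner k (mat_apply m D x) (mat_apply m D x)) \<le> Re (cinner m x x)"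
    and "\<And>i. i < n \<Longrightarrow> cinner k (mat_apply m D (A i)) (mat_apply m D (A i)) = cinner m (A i) (A i)"
    and "\<And>l j. D l j \<noteq> 0 \<Longrightarrow> (\<pi> l = \<pi> j) = (a = c)"
proof -
  define C' where "C' i l = (if a = c \<or> \<pi> i then 1 else -1) * C i l" for i l
  have gram': "gram m A i i' = gram k C' i i'" if "i < n" "i' < n" for i i'
    using gram_eq[OF that] gram_parity_twist[OF parity_C, where k=k and b="a = c"]
    unfolding C'_def by simp
  have parity_C': "\<And>i l. C' i l \<noteq> 0 \<Longrightarrow> (\<pi> i = \<pi> l) = c"
    using parity_C by (simp add: C'_def)
  obtain D where D_A: "\<And>i l. i < n \<Longrightarrow> l < k \<Longrightarrow> mat_apply m D (A i) l = C' i l"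
    and "\<And>x. Re (cinner k (mat_apply m D x) (mat_apply m D x)) \<le> Re (cinner m x x)"
    and "\<And>l j. D l j \<noteq> 0 \<Longrightarrow> (\<pi> l = \<pi> j) = (a = c)"
    using gram_intertwiner[where n=n and m=m and A=A and k=k and C=C' and \<pi>=\<pi>, OF gram' parity_A parity_C']
    by blast
  moreover have "cinner k (mat_apply m D (A i)) (mat_apply m D (A i)) = cinner m (A i) (A i)"
    if "i < n" for i
  proof -
    have "cinner k (mat_apply m D (A i)) (mat_apply m D (A i)) = gram k C' i i"
      using D_A that by (simp add: cinner_def gram_def mult.commute)
    also have "\<dots> = cinner m (A i) (A i)"
      using gram'[OF that that] by (simp add: cinner_def gram_def mult.commute)
    finally show ?thesis .
  qed
  ultimately show ?thesis
    using that unfolding C'_def by blast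
qed

section \<open>Occupation parity\<close>

lemma not_bit_if_less_exp: "(n::nat) < 2^t \<Longrightarrow> \<not> bit n t"
  by (simp add: bit_iff_odd div_less)

lemma bitcount_eq_sum_below:
  assumes "\<And>t. N \<le> t \<Longrightarrow> \<not> bit n t"
  shows "bitcount n = (\<Sum>t<N. if bit n t then 1 else 0)"
proof -
  have "\<not> bit n t" if "n \<le> t" for t
    using not_bit_if_less_exp less_le_trans[OF less_exp[of n]] that by simp
  then have "bitcount n = (\<Sum>t<max n N. if bit n t then 1 else 0)"
    unfolding bitcount_def by (intro sum.mono_neutral_left) auto
  also have "\<dots> = (\<Sum>t<N. if bit n t then 1 else 0)"
    using assms by (intro sum.mono_neutral_right) auto
  finally show ?thesis .
qed

lemma bit_mult_exp_add:
  fixes i k :: nat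
  assumes "k < 2^M"
  shows "bit (i * 2^M + k) t \<longleftrightarrow> (if t < M then bit k t else bit i (t - M))"
proof -
  have high: "\<not> bit k t" if "M \<le> t" for t
    using assms that by (meson not_bit_if_less_exp order_less_le_trans one_le_numeral power_increasing)
  have "i * 2^M + k = push_bit M i + k"
    by (simp add: push_bit_eq_mult)
  moreover have "bit (push_bit M i + k) t = (bit (push_bit M i) t \<or> bit k t)"
    by (rule bit_disjunctive_add_iff) (use high in \<open>auto simp: bit_push_bit_iff_nat\<close>)
  ultimately show ?thesis
    using high by (auto simp: bit_push_bit_iff_nat)
qed

lemma bitcount_mult_exp_add:
  fixes i k :: nat
  assumes k: "k < 2^M"
  shows "bitcount (i * 2^M + k) = bitcount i + bitcount k"
proof -
  have high_i: "\<not> bit i t" if "i \<le> t" for t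
    using not_bit_if_less_exp less_le_trans[OF less_exp[of i]] that by simp
  have high_k: "\<not> bit k t" if "M \<le> t" for t
    using k that by (meson not_bit_if_less_exp order_less_le_trans one_le_numeral power_increasing)
  have "bitcount (i * 2^M + k) = (\<Sum>t<M + i. if bit (i * 2^M + k) t then 1 else 0)"
    by (rule bitcount_eq_sum_below) (auto simp: bit_mult_exp_add[OF k] high_i)
  also have "\<dots> = (\<Sum>t\<in>{0..<M}. if bit (i * 2^M + k) t then 1 else 0)
      + (\<Sum>t\<in>{M..<M + i}. if bit (i * 2^M + k) t then 1 else 0)"
    by (simp add: lessThan_atLeast0 sum.atLeastLessThan_concat)
  also have "(\<Sum>t\<in>{0..<M}. if bit (i * 2^M + k) t then 1 else 0) = (\<Sum>t<M. if bit k t then 1 else 0)"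
    by (simp add: lessThan_atLeast0 bit_mult_exp_add[OF k])
  also have "(\<Sum>t\<in>{M..<M + i}. if bit (i * 2^M + k) t then 1 else 0)
      = (\<Sum>t\<in>{0 + M..<i + M}. if bit i (t - M) then 1 else 0)"
    by (intro sum.cong) (auto simp: bit_mult_exp_add[OF k])
  also have "\<dots> = (\<Sum>t<i. if bit i t then 1 else 0)"
    unfolding sum.shift_bounds_nat_ivl by (simp add: lessThan_atLeast0)
  also have "(\<Sum>t<i. if bit i t then 1 else 0) = bitcount i"
    by (simp add: bitcount_def)
  also have "(\<Sum>t<M. if bit k t then 1 else 0) = bitcount k"
    using bitcount_eq_sum_below[of M k, OF high_k] ..
  finally show ?thesis
    by simp
qed

lemma even_occ_mult_exp_add:
  fixes i k :: nat
  assumes "k < 2^M"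
  shows "even_occ (i * 2^M + k) \<longleftrightarrow> (even_occ i \<longleftrightarrow> even_occ k)"
  unfolding even_occ_def bitcount_mult_exp_add[OF assms] by simp

lemma even_occ_0: "even_occ 0"
  by (simp add: even_occ_def bitcount_def)

section \<open>Completing a contraction to a fermionic channel\<close>

definition contraction_defect :: "nat \<Rightarrow> nat \<Rightarrow> (nat \<Rightarrow> nat \<Rightarrow> complex) \<Rightarrow> nat \<Rightarrow> nat \<Rightarrow> complex" where
  "contraction_defect m k D j j' = (if j = j' then 1 else 0) - gram k (\<lambda>j l. cnj (D l j)) j j'"

lemma qform_contraction_defect:
  "qform m (contraction_defect m k D) x x = cinner m x x - cinner k (mat_apply m D x) (mat_apply m D x)"
  unfolding contraction_defect_def qform_diff
  unfolding qform_identity mat_apply_as_adj_apply cinner_adj_apply ..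

lemma psd_form_contraction_defect:
  assumes "\<And>x. Re (cinner k (mat_apply m D x) (mat_apply m D x)) \<le> Re (cinner m x x)"
  shows "psd_form m (contraction_defect m k D)"
  unfolding psd_form_def qform_contraction_defect using assms cinner_self by simp

lemma contraction_defect_block_diagonal:
  fixes \<pi> :: "nat \<Rightarrow> bool"
  assumes "\<And>l j. D l j \<noteq> 0 \<Longrightarrow> (\<pi> l = \<pi> j) = b"
  shows "block_diagonal \<pi> m (contraction_defect m k D)"
  unfolding block_diagonal_def
proof (intro allI impI)
  fix j j' assume "j < m" "j' < m" "\<pi> j \<noteq> \<pi> j'"
  then have "cnj (D l j) * D l j' = 0" for l
    using assms by (metis complex_cnj_zero mult_eq_0_iff)
  then have "gram k (\<lambda>j l. cnj (D l j)) j j' = 0"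
    unfolding gram_def by (simp add: sum.neutral)
  then show "contraction_defect m k D j j' = 0"
    using \<open>\<pi> j \<noteq> \<pi> j'\<close> by (auto simp: contraction_defect_def)
qed

lemma foldr_add_mat_carrier:
  "(\<And>x. x \<in> set xs \<Longrightarrow> f x \<in> carrier_mat nr nc) \<Longrightarrow> foldr (+) (map f xs) (0\<^sub>m nr nc) \<in> carrier_mat nr nc"
  by (induction xs) auto

lemma foldr_add_mat_index:
  assumes "\<And>x. x \<in> set xs \<Longrightarrow> f x \<in> carrier_mat nr nc" "i < nr" "j < nc"
  shows "foldr (+) (map f xs) (0\<^sub>m nr nc) $$ (i, j) = (\<Sum>x\<leftarrow>xs. f x $$ (i, j))"
  using assms(1)
proof (induction xs)
  case (Cons a xs)
  have "foldr (+) (map f xs) (0\<^sub>m nr nc) \<in> carrier_mat nr nc"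
    using Cons.prems by (intro foldr_add_mat_carrier) auto
  then show ?case
    using Cons assms(2,3) by simp
qed (use assms(2,3) in simp)

lemma cadj_mult_index:
  assumes "B \<in> carrier_mat k m" "j < m" "j' < m"
  shows "(cadj B * B) $$ (j, j') = (\<Sum>l<k. cnj (B $$ (l, j)) * B $$ (l, j'))"
  using assms by (simp add: cadj_def scalar_prod_def lessThan_atLeast0)

lemma cadj_mult_carrier: "B \<in> carrier_mat k m \<Longrightarrow> cadj B * B \<in> carrier_mat m m"
  by (auto simp: cadj_def)

lemma cadj_mult_mat_index:
  assumes "j < m" "j' < m"
  shows "(cadj (mat k m (\<lambda>(l, j). D l j)) * mat k m (\<lambda>(l, j). D l j)) $$ (j, j') = gram k (\<lambda>j l. cnj (D l j)) j j'"
  unfolding cadj_mult_index[OF mat_carrier assms] gram_def using assms by (intro sum.cong) auto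

text \<open>Row \<open>0\<close> is the vacuum, so \<open>|0\<rangle>\<langle>u\<^sub>t|\<close> has the parity of the column \<open>u\<^sub>t\<close>.\<close>
definition defect_kraus :: "nat \<Rightarrow> nat \<Rightarrow> (nat \<Rightarrow> nat \<Rightarrow> complex) \<Rightarrow> nat \<Rightarrow> complex mat" where
  "defect_kraus k m u t = mat k m (\<lambda>(l, j). if l = 0 then cnj (u j t) else 0)"

lemma cadj_mult_defect_kraus_index:
  assumes "0 < k" "j < m" "j' < m"
  shows "(cadj (defect_kraus k m u t) * defect_kraus k m u t) $$ (j, j') = u j t * cnj (u j' t)"
proof -
  have "(cadj (defect_kraus k m u t) * defect_kraus k m u t) $$ (j, j')
      = (\<Sum>l<k. if l = 0 then u j t * cnj (u j' t) else 0)"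
    unfolding defect_kraus_def cadj_mult_index[OF mat_carrier assms(2,3)]
    using assms(2,3) by (intro sum.cong) auto
  then show ?thesis
    using assms(1) by simp
qed

lemma defect_kraus_parity:
  assumes "echelon_factor even_occ (2^M) u"
  shows "even_kraus M K (defect_kraus (2^K) (2^M) u t) \<or> odd_kraus M K (defect_kraus (2^K) (2^M) u t)"
proof -
  have u_parity: "even_occ j = even_occ t" if "u j t \<noteq> 0" for j
    using assms that unfolding echelon_factor_def by blast
  have "l = 0 \<and> even_occ j = even_occ t"
    if "defect_kraus (2^K) (2^M) u t $$ (l, j) \<noteq> 0" "l < 2^K" "j < 2^M" for l j
    using that u_parity[of j] by (simp add: defect_kraus_def split: if_splits)
  moreover have "defect_kraus (2^K) (2^M) u t \<in> carrier_mat (2^K) (2^M)"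
    by (simp add: defect_kraus_def)
  ultimately show ?thesis
    using even_occ_0 unfolding even_kraus_def odd_kraus_def by (cases "even_occ t") auto
qed

lemma mat_kraus_parity:
  assumes "\<And>l j. D l j \<noteq> 0 \<Longrightarrow> (even_occ l = even_occ j) = b"
  shows "even_kraus M K (mat (2^K) (2^M) (\<lambda>(l, j). D l j)) \<or> odd_kraus M K (mat (2^K) (2^M) (\<lambda>(l, j). D l j))"
proof -
  have "D l j = 0" if "(even_occ l = even_occ j) \<noteq> b" for l j
    using that assms[of l j] by auto
  then show ?thesis
    unfolding even_kraus_def odd_kraus_def by (cases b) auto
qed

lemma fchannel_defect_completion:
  assumes u: "echelon_factor even_occ (2^M) u"
    and defect: "\<And>j j'. j < 2^M \<Longrightarrow> j' < 2^M \<Longrightarrow> contraction_defect (2^M) (2^K) D j j' = gram (2^M) u j j'"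
    and parity: "\<And>l j. D l j \<noteq> 0 \<Longrightarrow> (even_occ l = even_occ j) = b"
  shows "fchannel M K (mat (2^K) (2^M) (\<lambda>(l, j). D l j) # map (defect_kraus (2^K) (2^M) u) [0..<2^M])"
    (is "fchannel M K ?Ks")
  unfolding fchannel_def
proof
  show "\<forall>F\<in>set ?Ks. even_kraus M K F \<or> odd_kraus M K F"
    using mat_kraus_parity[OF parity] defect_kraus_parity[OF u] by auto
  have carrier: "F \<in> carrier_mat (2^K) (2^M)" if "F \<in> set ?Ks" for F
    using that by (auto simp: defect_kraus_def)
  have "foldr (+) (map (\<lambda>F. cadj F * F) ?Ks) (0\<^sub>m (2^M) (2^M)) \<in> carrier_mat (2^M) (2^M)"
    using carrier cadj_mult_carrier by (intro foldr_add_mat_carrier) auto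
  then show "foldr (+) (map (\<lambda>F. cadj F * F) ?Ks) (0\<^sub>m (2^M) (2^M)) = 1\<^sub>m (2^M)"
  proof (intro eq_matI)
    fix j j' assume "j < dim_row (1\<^sub>m (2^M))" "j' < dim_col (1\<^sub>m (2^M))"
    then have j: "j < 2^M" "j' < 2^M"
      by auto
    have "foldr (+) (map (\<lambda>F. cadj F * F) ?Ks) (0\<^sub>m (2^M) (2^M)) $$ (j, j')
        = (\<Sum>F\<leftarrow>?Ks. (cadj F * F) $$ (j, j'))"
      using carrier cadj_mult_carrier by (intro foldr_add_mat_index[OF _ j]) auto
    also have "\<dots> = gram (2^K) (\<lambda>j l. cnj (D l j)) j j' + gram (2^M) u j j'"
      using j by (simp add: cadj_mult_mat_index cadj_mult_defect_kraus_index comp_def gram_def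
          interv_sum_list_conv_sum_set_nat lessThan_atLeast0)
    also have "\<dots> = 1\<^sub>m (2^M) $$ (j, j')"
      using defect[OF j] j unfolding contraction_defect_def by (simp add: diff_eq_eq)
    finally show "foldr (+) (map (\<lambda>F. cadj F * F) ?Ks) (0\<^sub>m (2^M) (2^M)) $$ (j, j') = 1\<^sub>m (2^M) $$ (j, j')" .
  qed auto
qed

lemma defect_kraus_annihilates:
  assumes defect: "\<And>j j'. j < m \<Longrightarrow> j' < m \<Longrightarrow> contraction_defect m k D j j' = gram m u j j'"
    and isometric: "cinner k (mat_apply m D a) (mat_apply m D a) = cinner m a a"
    and "t < m" "l < k"
  shows "(\<Sum>j<m. defect_kraus k m u t $$ (l, j) * a j) = 0"
proof -
  have "cinner m (adj_apply m u a) (adj_apply m u a) = qform m (contraction_defect m k D) a a"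
    unfolding cinner_adj_apply using defect by (intro qform_cong) simp
  also have "\<dots> = 0"
    unfolding qform_contraction_defect using isometric by simp
  finally have "adj_apply m u a t = 0"
    using cinner_self_eq_0D \<open>t < m\<close> by blast
  have "(\<Sum>j<m. defect_kraus k m u t $$ (l, j) * a j) = (\<Sum>j<m. if l = 0 then cnj (u j t) * a j else 0)"
    using \<open>l < k\<close> by (intro sum.cong) (simp_all add: defect_kraus_def)
  also have "\<dots> = (if l = 0 then adj_apply m u a t else 0)"
    by (simp add: adj_apply_def)
  finally show ?thesis
    using \<open>adj_apply m u a t = 0\<close> by simp
qed

lemma parity_contraction_kraus_completion:
  fixes D :: "nat \<Rightarrow> nat \<Rightarrow> complex"
  assumes contraction: "\<And>x. Re (cinner (2^K) (mat_apply (2^M) D x) (mat_apply (2^M) D x)) \<le> Re (cinner (2^M) x x)"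
    and parity: "\<And>l j. D l j \<noteq> 0 \<Longrightarrow> (even_occ l = even_occ j) = b"
  obtains Es where "fchannel M K (mat (2^K) (2^M) (\<lambda>(l, j). D l j) # Es)"
    and "\<And>E a l. E \<in> set Es \<Longrightarrow>
      cinner (2^K) (mat_apply (2^M) D a) (mat_apply (2^M) D a) = cinner (2^M) a a \<Longrightarrow>
      l < 2^K \<Longrightarrow> (\<Sum>j<2^M. E $$ (l, j) * a j) = 0"
proof -
  obtain u where u: "echelon_factor even_occ (2^M) u"
    and defect: "\<And>j j'. j < 2^M \<Longrightarrow> j' < 2^M \<Longrightarrow> contraction_defect (2^M) (2^K) D j j' = gram (2^M) u j j'"
    using psd_form_echelon_factorization[OF psd_form_contraction_defect[OF contraction]
        contraction_defect_block_diagonal[where \<pi>=even_occ, OF parity]] by blast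
  show ?thesis
  proof (rule that[OF fchannel_defect_completion[OF u defect parity]])
    fix E a and l :: nat
    assume "E \<in> set (map (defect_kraus (2^K) (2^M) u) [0..<2^M])"
      and "cinner (2^K) (mat_apply (2^M) D a) (mat_apply (2^M) D a) = cinner (2^M) a a" "l < 2^K"
    then show "(\<Sum>j<2^M. E $$ (l, j) * a j) = 0"
      using defect_kraus_annihilates[OF defect] by auto
  qed
qed

section \<open>Pure states in the Jordan-Wigner representation\<close>

lemma mult_add_less_mult:
  fixes i j n m :: nat
  assumes "i < n" "j < m"
  shows "i * m + j < n * m"
proof -
  have "i * m + j < Suc i * m"
    using assms(2) by simp
  also have "\<dots> \<le> n * m"
    using assms(1) by (intro mult_right_mono) auto
  finally show ?thesis .
qed

lemma sum_lessThan_mult: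
  fixes f :: "nat \<Rightarrow> 'a::comm_monoid_add"
  shows "(\<Sum>x<a * b. f x) = (\<Sum>i<a. \<Sum>k<b. f (i * b + k))"
proof (induction a)
  case (Suc a)
  have "(\<Sum>x<Suc a * b. f x) = (\<Sum>x\<in>{0..<a * b}. f x) + (\<Sum>x\<in>{a * b..<a * b + b}. f x)"
    by (simp add: lessThan_atLeast0 sum.atLeastLessThan_concat add.commute)
  also have "(\<Sum>x\<in>{a * b..<a * b + b}. f x) = (\<Sum>k<b. f (a * b + k))"
    using sum.shift_bounds_nat_ivl[of f 0 "a * b" b] by (simp add: lessThan_atLeast0 add.commute)
  finally show ?case
    using Suc by (simp add: lessThan_atLeast0)
qed simp

lemma psd_form_of_psd:
  assumes "psd n A"
  shows "psd_form n (\<lambda>i j. A $$ (i, j))"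
  unfolding psd_form_def
proof
  fix x :: "nat \<Rightarrow> complex"
  have "A \<in> carrier_mat n n"
    using assms by (simp add: psd_def)
  then have "(\<Sum>i<n. cnj (vec n x $ i) * (A *\<^sub>v vec n x) $ i) = qform n (\<lambda>i j. A $$ (i, j)) x x"
    unfolding qform_def
    by (intro sum.cong refl) (simp add: sum_distrib_left algebra_simps scalar_prod_def lessThan_atLeast0)
  then show "Im (qform n (\<lambda>i j. A $$ (i, j)) x x) = 0 \<and> 0 \<le> Re (qform n (\<lambda>i j. A $$ (i, j)) x x)"
    using assms unfolding psd_def Let_def by (metis dim_vec)
qed

lemma fstate_psd_form:
  assumes "fstate L \<rho>"
  shows "psd_form (2^L) (\<lambda>i j. \<rho> $$ (i, j))" "block_diagonal even_occ (2^L) (\<lambda>i j. \<rho> $$ (i, j))"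
proof -
  obtain \<rho>e \<rho>o where \<rho>: "\<rho> = \<rho>e + \<rho>o" "psd (2^L) \<rho>e" "psd (2^L) \<rho>o"
    "supported_on (2^L) True \<rho>e" "supported_on (2^L) False \<rho>o"
    using assms unfolding fstate_def by blast
  have "\<rho>e \<in> carrier_mat (2^L) (2^L)" "\<rho>o \<in> carrier_mat (2^L) (2^L)"
    using \<rho>(2,3) by (simp_all add: psd_def)
  then have entries: "\<rho> $$ (i, j) = \<rho>e $$ (i, j) + \<rho>o $$ (i, j)" if "i < 2^L" "j < 2^L" for i j
    using \<rho>(1) that by simp
  have "qform (2^L) (\<lambda>i j. \<rho> $$ (i, j)) x x = qform (2^L) (\<lambda>i j. \<rho>e $$ (i, j) + \<rho>o $$ (i, j)) x x" for x
    using entries by (rule qform_cong)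
  then show "psd_form (2^L) (\<lambda>i j. \<rho> $$ (i, j))"
    using psd_form_add[OF psd_form_of_psd[OF \<rho>(2)] psd_form_of_psd[OF \<rho>(3)]]
    unfolding psd_form_def by simp
  show "block_diagonal even_occ (2^L) (\<lambda>i j. \<rho> $$ (i, j))"
    using \<rho>(4,5) entries unfolding block_diagonal_def supported_on_def by (metis add.right_neutral)
qed

lemma outer_carrier: "outer v \<in> carrier_mat (dim_vec v) (dim_vec v)"
  by (simp add: outer_def)

lemma psd_outer: "dim_vec v = N \<Longrightarrow> psd N (outer v)"
  unfolding psd_def Let_def
proof (intro conjI allI impI)
  assume v: "dim_vec v = N"
  then show "outer v \<in> carrier_mat N N"
    using outer_carrier by metis
  fix y :: "complex vec" assume y: "dim_vec y = N"
  define c where "c = (\<Sum>z<N. cnj (v $ z) * y $ z)"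
  have "(outer v *\<^sub>v y) $ x = v $ x * c" if "x < N" for x
    using v y that
    by (simp add: outer_def c_def scalar_prod_def lessThan_atLeast0 sum_distrib_left algebra_simps)
  then have "(\<Sum>i<N. cnj (y $ i) * (outer v *\<^sub>v y) $ i) = cnj c * c"
    by (simp add: c_def cnj_sum sum_distrib_right algebra_simps)
  then show "Im (\<Sum>i<N. cnj (y $ i) * (outer v *\<^sub>v y) $ i) = 0"
    and "0 \<le> Re (\<Sum>i<N. cnj (y $ i) * (outer v *\<^sub>v y) $ i)"
    by (simp_all add: mult.commute[of "cnj c"] complex_mult_cnj)
qed

lemma psd_zero: "psd N (0\<^sub>m N N)"
  unfolding psd_def Let_def by (auto simp: scalar_prod_def)

lemma fpure_outer:
  assumes v: "dim_vec v = 2^N" "v \<noteq> 0\<^sub>v (2^N)"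
    and parity: "\<And>x. x < 2^N \<Longrightarrow> v $ x \<noteq> 0 \<Longrightarrow> even_occ x = p"
    and trace: "Re (\<Sum>x<2^N. v $ x * cnj (v $ x)) \<le> 1"
  shows "fpure N (outer v)"
proof -
  have carrier: "outer v \<in> carrier_mat (2^N) (2^N)"
    using outer_carrier v(1) by metis
  have supported: "supported_on (2^N) p (outer v)"
    using parity v(1) unfolding supported_on_def by (auto simp: outer_def)
  have "\<exists>\<rho>e \<rho>o. outer v = \<rho>e + \<rho>o \<and> psd (2^N) \<rho>e \<and> psd (2^N) \<rho>o \<and>
      supported_on (2^N) True \<rho>e \<and> supported_on (2^N) False \<rho>o"
  proof (cases p)
    case True
    then show ?thesis
      using carrier supported psd_outer[OF v(1)] psd_zero
      by (intro exI[of _ "outer v"] exI[of _ "0\<^sub>m (2^N) (2^N)"]) (simp add: supported_on_def)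
  next
    case False
    then show ?thesis
      using carrier supported psd_outer[OF v(1)] psd_zero
      by (intro exI[of _ "0\<^sub>m (2^N) (2^N)"] exI[of _ "outer v"]) (simp add: supported_on_def)
  qed
  moreover have "(\<Sum>x<2^N. outer v $$ (x, x)) = (\<Sum>x<2^N. v $ x * cnj (v $ x))"
    using v(1) by (simp add: outer_def)
  ultimately show ?thesis
    unfolding fpure_def fstate_def using carrier v trace by auto
qed

lemma fpure_obtain_vector:
  assumes "fpure N \<Psi>"
  obtains v p where "dim_vec v = 2^N" "v \<noteq> 0\<^sub>v (2^N)" "\<Psi> = outer v"
    and "\<And>x. x < 2^N \<Longrightarrow> v $ x \<noteq> 0 \<Longrightarrow> even_occ x = p"
proof -
  obtain v where v: "dim_vec v = 2^N" "v \<noteq> 0\<^sub>v (2^N)" "\<Psi> = outer v"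
    using assms unfolding fpure_def by blast
  have "block_diagonal even_occ (2^N) (\<lambda>i j. \<Psi> $$ (i, j))"
    using fstate_psd_form(2) assms unfolding fpure_def by blast
  then have cross: "v $ x * cnj (v $ y) = 0" if "x < 2^N" "y < 2^N" "even_occ x \<noteq> even_occ y" for x y
    using v that unfolding block_diagonal_def by (simp add: outer_def)
  obtain x0 where "x0 < 2^N" "v $ x0 \<noteq> 0"
    using v(1,2) by (metis eq_vecI index_zero_vec(1,2))
  then have "even_occ x = even_occ x0" if "x < 2^N" "v $ x \<noteq> 0" for x
    using cross[OF that(1)] that(2) by fastforce
  then show ?thesis
    using that v by blast
qed

definition coeff_matrix :: "nat \<Rightarrow> nat \<Rightarrow> complex vec \<Rightarrow> nat \<Rightarrow> nat \<Rightarrow> complex" where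
  "coeff_matrix n m v i j = (if i < n \<and> j < m then v $ (i * m + j) else 0)"

lemma fptrace_outer:
  assumes "dim_vec v = 2^(L + M)" "i < 2^L" "i' < 2^L"
  shows "fptrace L M (outer v) $$ (i, i') = gram (2^M) (coeff_matrix (2^L) (2^M) v) i i'"
proof -
  have "i * 2^M + j < 2^(L + M)" "i' * 2^M + j < 2^(L + M)" if "j < 2^M" for j
    using mult_add_less_mult[OF assms(2) that] mult_add_less_mult[OF assms(3) that]
    by (simp_all add: power_add)
  then show ?thesis
    using assms by (simp add: fptrace_def outer_def gram_def coeff_matrix_def)
qed

lemma trace_fptrace_outer:
  assumes "dim_vec v = 2^(L + M)"
  shows "(\<Sum>i<2^L. fptrace L M (outer v) $$ (i, i)) = (\<Sum>x<2^(L + M). v $ x * cnj (v $ x))"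
proof -
  have "(\<Sum>i<2^L. fptrace L M (outer v) $$ (i, i))
      = (\<Sum>i<2^L. \<Sum>j<2^M. v $ (i * 2^M + j) * cnj (v $ (i * 2^M + j)))"
    by (intro sum.cong) (simp_all add: fptrace_outer[OF assms] gram_def coeff_matrix_def)
  also have "\<dots> = (\<Sum>x<2^(L + M). v $ x * cnj (v $ x))"
    using sum_lessThan_mult[of "\<lambda>x. v $ x * cnj (v $ x)" "2^L" "2^M"] by (simp add: power_add)
  finally show ?thesis .
qed

lemma coeff_matrix_parity:
  assumes "\<And>x. x < 2^(L + M) \<Longrightarrow> v $ x \<noteq> 0 \<Longrightarrow> even_occ x = p"
    and "coeff_matrix (2^L) (2^M) v i j \<noteq> 0"
  shows "(even_occ i = even_occ j) = p"
proof -
  have "i < 2^L" "j < 2^M" "v $ (i * 2^M + j) \<noteq> 0"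
    using assms(2) by (auto simp: coeff_matrix_def split: if_splits)
  moreover from this have "i * 2^M + j < 2^(L + M)"
    using mult_add_less_mult by (simp add: power_add)
  ultimately show ?thesis
    using assms(1) even_occ_mult_exp_add by blast
qed

lemma outer_mult:
  assumes W: "W \<in> carrier_mat N N'" and v: "dim_vec v = N'"
  shows "W * outer v * cadj W = outer (W *\<^sub>v v)"
proof (rule eq_matI)
  fix x y assume "x < dim_row (outer (W *\<^sub>v v))" "y < dim_col (outer (W *\<^sub>v v))"
  then have x: "x < N" and y: "y < N"
    using W by (auto simp: outer_def)
  have "(W * outer v * cadj W) $$ (x, y)
      = (\<Sum>b<N'. (\<Sum>a<N'. W $$ (x, a) * (v $ a * cnj (v $ b))) * cnj (W $$ (y, b)))"
    using W v x y by (simp add: outer_def cadj_def scalar_prod_def lessThan_atLeast0)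
  also have "\<dots> = (\<Sum>b<N'. \<Sum>a<N'. W $$ (x, a) * v $ a * (cnj (W $$ (y, b)) * cnj (v $ b)))"
    by (simp add: sum_distrib_left sum_distrib_right algebra_simps)
  also have "\<dots> = (\<Sum>a<N'. W $$ (x, a) * v $ a) * cnj (\<Sum>b<N'. W $$ (y, b) * v $ b)"
    unfolding sum_product cnj_sum by (subst sum.swap) simp
  also have "\<dots> = outer (W *\<^sub>v v) $$ (x, y)"
    using W v x y by (simp add: outer_def scalar_prod_def lessThan_atLeast0)
  finally show "(W * outer v * cadj W) $$ (x, y) = outer (W *\<^sub>v v) $$ (x, y)" .
qed (use W in \<open>simp_all add: outer_def cadj_def\<close>)

lemma apply_kraus_outer:
  assumes W: "W \<in> carrier_mat n n'" and v: "dim_vec v = n'"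
    and Es: "\<And>E. E \<in> set Es \<Longrightarrow> E \<in> carrier_mat n n' \<and> E *\<^sub>v v = 0\<^sub>v n"
  shows "apply_kraus n (W # Es) (outer v) = outer (W *\<^sub>v v)"
proof -
  have "foldr (+) (map (\<lambda>D. D * outer v * cadj D) Es) (0\<^sub>m n n) = 0\<^sub>m n n"
    using Es
  proof (induction Es)
    case (Cons E Es)
    then have "E * outer v * cadj E = 0\<^sub>m n n"
      using outer_mult[of E n n' v] v by (auto simp: outer_def)
    then show ?case
      using Cons by simp
  qed simp
  moreover have "outer (W *\<^sub>v v) \<in> carrier_mat n n"
    using W outer_carrier[of "W *\<^sub>v v"] by simp
  ultimately show ?thesis
    using outer_mult[OF W v] by (simp add: apply_kraus_def)
qed

lemma kron_diagonal_mult_vec: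
  assumes X: "X \<in> carrier_mat n n" and diagonal: "\<And>i i'. i < n \<Longrightarrow> i' < n \<Longrightarrow> i \<noteq> i' \<Longrightarrow> X $$ (i, i') = 0"
    and B: "B \<in> carrier_mat k m" and v: "dim_vec v = n * m" and i: "i < n" and l: "l < k"
  shows "(kron X B *\<^sub>v v) $ (i * k + l) = X $$ (i, i) * (\<Sum>j<m. B $$ (l, j) * coeff_matrix n m v i j)"
proof -
  have x: "i * k + l < n * k" "(i * k + l) div k = i" "(i * k + l) mod k = l"
    using mult_add_less_mult[OF i l] l by auto
  have "(kron X B *\<^sub>v v) $ (i * k + l) = (\<Sum>y<n * m. kron X B $$ (i * k + l, y) * v $ y)"
    using X B v x by (simp add: kron_def scalar_prod_def lessThan_atLeast0)
  also have "\<dots> = (\<Sum>i'<n. X $$ (i, i') * (\<Sum>j<m. B $$ (l, j) * coeff_matrix n m v i' j))"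
    unfolding sum_lessThan_mult sum_distrib_left
  proof (intro sum.cong refl)
    fix i' j assume "i' \<in> {..<n}" "j \<in> {..<m}"
    then have "i' < n" "j < m"
      by auto
    then have "(i' * m + j) div m = i'" "(i' * m + j) mod m = j" "i' * m + j < n * m"
      using mult_add_less_mult by auto
    then show "kron X B $$ (i * k + l, i' * m + j) * v $ (i' * m + j)
        = X $$ (i, i') * (B $$ (l, j) * coeff_matrix n m v i' j)"
      using X B x \<open>i' < n\<close> \<open>j < m\<close> by (simp add: kron_def coeff_matrix_def)
  qed
  also have "\<dots> = (\<Sum>i'<n. if i' = i then X $$ (i, i) * (\<Sum>j<m. B $$ (l, j) * coeff_matrix n m v i j) else 0)"
    using diagonal i by (intro sum.cong) auto
  finally show ?thesis
    using i by simp
qed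

text \<open>In the Jordan-Wigner picture an odd Kraus operator acting after the \<open>L\<close> modes picks up the
  string \<open>(\<sigma>\<^sup>z)\<^sup>\<otimes>\<^sup>L\<close>, i.e. the sign of the occupation parity of the \<open>L\<close>-index.\<close>
lemma id_par_kraus_mult_vec:
  assumes F: "F \<in> carrier_mat (2^K) (2^M)" and v: "dim_vec v = 2^(L + M)" and i: "i < 2^L" and l: "l < 2^K"
  shows "(kron (if even_kraus M K F then 1\<^sub>m (2^L) else parity_op L) F *\<^sub>v v) $ (i * 2^K + l)
    = (if even_kraus M K F \<or> even_occ i then 1 else -1) * (\<Sum>j<2^M. F $$ (l, j) * coeff_matrix (2^L) (2^M) v i j)"
proof -
  have "dim_vec v = 2^L * 2^M"
    using v by (simp add: power_add)
  moreover have "(if even_kraus M K F then 1\<^sub>m (2^L) else parity_op L) \<in> carrier_mat (2^L) (2^L)"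
    by (simp add: parity_op_def)
  ultimately show ?thesis
    using kron_diagonal_mult_vec[OF _ _ F _ i l] i by (simp add: parity_op_def)
qed

lemma id_par_kraus_mult_vec_eqI:
  assumes F: "F \<in> carrier_mat (2^K) (2^M)" and v: "dim_vec v = 2^(L + M)" and z: "dim_vec z = 2^(L + K)"
    and entries: "\<And>i l. i < 2^L \<Longrightarrow> l < 2^K \<Longrightarrow>
      (if even_kraus M K F \<or> even_occ i then 1 else -1) * (\<Sum>j<2^M. F $$ (l, j) * coeff_matrix (2^L) (2^M) v i j)
      = z $ (i * 2^K + l)"
  shows "kron (if even_kraus M K F then 1\<^sub>m (2^L) else parity_op L) F *\<^sub>v v = z"
proof (rule eq_vecI)
  fix x assume "x < dim_vec z"
  then have x: "x div 2^K < 2^L" "x mod 2^K < 2^K" "x = x div 2^K * 2^K + x mod 2^K"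
    using z by (simp_all add: less_mult_imp_div_less power_add div_mult_mod_eq)
  then show "(kron (if even_kraus M K F then 1\<^sub>m (2^L) else parity_op L) F *\<^sub>v v) $ x = z $ x"
    using id_par_kraus_mult_vec[OF F v x(1,2)] entries[OF x(1,2)] by simp
qed (use F z in \<open>simp add: kron_def parity_op_def power_add\<close>)

lemma apply_kraus_id_par_outer:
  assumes channel: "fchannel M K (mat (2^K) (2^M) (\<lambda>(l, j). D l j) # Fs)"
    and v: "dim_vec v = 2^(L + M)" and w: "dim_vec w = 2^(L + K)"
    and first: "\<And>i l. i < 2^L \<Longrightarrow> l < 2^K \<Longrightarrow>
      (if even_kraus M K (mat (2^K) (2^M) (\<lambda>(l, j). D l j)) \<or> even_occ i then 1 else -1)
      * mat_apply (2^M) D (coeff_matrix (2^L) (2^M) v i) l = coeff_matrix (2^L) (2^K) w i l"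
    and rest: "\<And>F i l. F \<in> set Fs \<Longrightarrow> i < 2^L \<Longrightarrow> l < 2^K \<Longrightarrow>
      (\<Sum>j<2^M. F $$ (l, j) * coeff_matrix (2^L) (2^M) v i j) = 0"
  shows "apply_kraus (2^(L + K)) (id_par L M K (mat (2^K) (2^M) (\<lambda>(l, j). D l j) # Fs)) (outer v) = outer w"
proof -
  define F0 where "F0 = mat (2^K) (2^M) (\<lambda>(l, j). D l j)"
  define X where "X F = (if even_kraus M K F then 1\<^sub>m (2^L) else parity_op L)" for F
  have carrier: "F \<in> carrier_mat (2^K) (2^M)" if "F \<in> set (F0 # Fs)" for F
    using channel that unfolding fchannel_def even_kraus_def odd_kraus_def F0_def by blast
  have kron_carrier: "kron (X F) F \<in> carrier_mat (2^(L + K)) (2^(L + M))" if "F \<in> set (F0 # Fs)" for F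
    using carrier[OF that] by (simp add: X_def kron_def parity_op_def power_add)
  have "(if even_kraus M K F0 \<or> even_occ i then 1 else -1)
      * (\<Sum>j<2^M. F0 $$ (l, j) * coeff_matrix (2^L) (2^M) v i j) = w $ (i * 2^K + l)"
    if "i < 2^L" "l < 2^K" for i l
  proof -
    have "(\<Sum>j<2^M. F0 $$ (l, j) * coeff_matrix (2^L) (2^M) v i j)
        = mat_apply (2^M) D (coeff_matrix (2^L) (2^M) v i) l"
      using that(2) by (simp add: F0_def mat_apply_def)
    moreover have "coeff_matrix (2^L) (2^K) w i l = w $ (i * 2^K + l)"
      using that by (simp add: coeff_matrix_def)
    ultimately show ?thesis
      using first[OF that] unfolding F0_def by simp
  qed
  then have "kron (X F0) F0 *\<^sub>v v = w"
    unfolding X_def using carrier by (intro id_par_kraus_mult_vec_eqI[OF _ v w]) auto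
  moreover have "kron (X F) F *\<^sub>v v = 0\<^sub>v (2^(L + K))" if "F \<in> set Fs" for F
    unfolding X_def using carrier rest[OF that] that mult_add_less_mult[of _ "2^L" _ "2^K"]
    by (intro id_par_kraus_mult_vec_eqI[OF _ v]) (auto simp: power_add)
  moreover have "id_par L M K (F0 # Fs) = kron (X F0) F0 # map (\<lambda>F. kron (X F) F) Fs"
    by (simp add: id_par_def X_def)
  ultimately show ?thesis
    using apply_kraus_outer[OF kron_carrier v, of F0 "map (\<lambda>F. kron (X F) F) Fs"] kron_carrier
    unfolding F0_def by auto
qed

lemma parity_kraus_sign_cancel:
  assumes parity: "\<And>l j. D l j \<noteq> 0 \<Longrightarrow> (even_occ l = even_occ j) = b"
    and image: "mat_apply (2^M) D x l = (if b \<or> even_occ i then 1 else -1) * c" and "l < 2^K"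
  shows "(if even_kraus M K (mat (2^K) (2^M) (\<lambda>(l, j). D l j)) \<or> even_occ i then 1 else -1)
    * mat_apply (2^M) D x l = c"
proof (cases b)
  case True
  then have "even_kraus M K (mat (2^K) (2^M) (\<lambda>(l, j). D l j))"
    using parity by (auto simp: even_kraus_def)
  then show ?thesis
    using image True by simp
next
  case False
  show ?thesis
  proof (cases "even_kraus M K (mat (2^K) (2^M) (\<lambda>(l, j). D l j))")
    case True
    then have "D l j = 0" if "j < 2^M" for j
      using parity[of l j] False \<open>l < 2^K\<close> that unfolding even_kraus_def by auto
    then have "mat_apply (2^M) D x l = 0"
      by (simp add: mat_apply_def)
    then show ?thesis
      using image by (auto split: if_splits)
  next
    case False
    then show ?thesis
      using image \<open>\<not> b\<close> by (cases "even_occ i") auto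
  qed
qed

definition purification_vec :: "nat \<Rightarrow> (nat \<Rightarrow> nat \<Rightarrow> complex) \<Rightarrow> complex vec" where
  "purification_vec n u = vec (n * n) (\<lambda>x. u (x div n) (x mod n))"

lemma purification_vec_index: "i < n \<Longrightarrow> s < n \<Longrightarrow> purification_vec n u $ (i * n + s) = u i s"
  using mult_add_less_mult[of i n s n] by (simp add: purification_vec_def)

lemma fptrace_outer_purification_vec:
  assumes "i < 2^L" "i' < 2^L"
  shows "fptrace L L (outer (purification_vec (2^L) u)) $$ (i, i') = gram (2^L) u i i'"
proof -
  have "dim_vec (purification_vec (2^L) u) = 2^(L + L)"
    by (simp add: purification_vec_def power_add)
  then have "fptrace L L (outer (purification_vec (2^L) u)) $$ (i, i')
      = gram (2^L) (coeff_matrix (2^L) (2^L) (purification_vec (2^L) u)) i i'"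
    using assms by (rule fptrace_outer)
  also have "\<dots> = gram (2^L) u i i'"
    unfolding gram_def coeff_matrix_def using assms by (intro sum.cong) (auto simp: purification_vec_index)
  finally show ?thesis .
qed

lemma purification_vec_even:
  assumes "echelon_factor even_occ (2^L) u" "x < 2^(L + L)" "purification_vec (2^L) u $ x \<noteq> 0"
  shows "even_occ x"
proof -
  have "u (x div 2^L) (x mod 2^L) \<noteq> 0"
    using assms(2,3) by (simp add: purification_vec_def power_add)
  then have "even_occ (x div 2^L) = even_occ (x mod 2^L)"
    using assms(1) unfolding echelon_factor_def by blast
  moreover have "x = x div 2^L * 2^L + x mod 2^L" "x mod 2^L < 2^L"
    by (simp_all add: div_mult_mod_eq)
  ultimately show ?thesis
    using even_occ_mult_exp_add by metis
qed

section \<open>Purification\<close>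

lemma fermionic_purification_exists:
  assumes \<rho>: "fstate L \<rho>" and nonzero: "\<rho> \<noteq> 0\<^sub>m (2^L) (2^L)"
  shows "\<exists>\<Psi>. fpure (L + L) \<Psi> \<and> fptrace L L \<Psi> = \<rho>"
proof -
  obtain u where u: "echelon_factor even_occ (2^L) u"
    and \<rho>_u: "\<And>i j. i < 2^L \<Longrightarrow> j < 2^L \<Longrightarrow> \<rho> $$ (i, j) = gram (2^L) u i j"
    using psd_form_echelon_factorization[OF fstate_psd_form[OF \<rho>]] by blast
  have \<rho>_carrier: "\<rho> \<in> carrier_mat (2^L) (2^L)"
    using \<rho> by (simp add: fstate_def)
  define v where "v = purification_vec (2^L) u"
  have v_dim: "dim_vec v = 2^(L + L)"
    by (simp add: v_def purification_vec_def power_add)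
  have trace: "fptrace L L (outer v) = \<rho>"
    using \<rho>_carrier \<rho>_u fptrace_outer_purification_vec unfolding v_def
    by (intro eq_matI) (auto simp: fptrace_def)
  have "fpure (L + L) (outer v)"
  proof (rule fpure_outer[OF v_dim])
    show "v \<noteq> 0\<^sub>v (2^(L + L))"
    proof
      assume "v = 0\<^sub>v (2^(L + L))"
      then have "u i s = 0" if "i < 2^L" "s < 2^L" for i s
        using purification_vec_index[OF that, of u] mult_add_less_mult[OF that]
        by (simp add: v_def power_add)
      then have "\<rho> = 0\<^sub>m (2^L) (2^L)"
        using \<rho>_u \<rho>_carrier by (intro eq_matI) (auto simp: gram_def)
      then show False
        using nonzero by simp
    qed
  next
    show "x < 2^(L + L) \<Longrightarrow> v $ x \<noteq> 0 \<Longrightarrow> even_occ x = True" for x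
      using purification_vec_even[OF u] unfolding v_def by simp
  next
    show "Re (\<Sum>x<2^(L + L). v $ x * cnj (v $ x)) \<le> 1"
      using trace_fptrace_outer[OF v_dim] trace \<rho> by (simp add: fstate_def)
  qed
  then show ?thesis
    using trace by blast
qed

lemma purifications_related_by_channel:
  assumes \<Psi>: "fpure (L + M) \<Psi>" "fptrace L M \<Psi> = \<rho>"
    and \<Phi>: "fpure (L + K) \<Phi>" "fptrace L K \<Phi> = \<rho>"
  shows "\<exists>Ks. fchannel M K Ks \<and> apply_kraus (2^(L + K)) (id_par L M K Ks) \<Psi> = \<Phi>"
proof -
  obtain v pv where v: "dim_vec v = 2^(L + M)" "\<Psi> = outer v"
    and v_parity: "\<And>x. x < 2^(L + M) \<Longrightarrow> v $ x \<noteq> 0 \<Longrightarrow> even_occ x = pv"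
    using fpure_obtain_vector[OF \<Psi>(1)] by metis
  obtain w pw where w: "dim_vec w = 2^(L + K)" "\<Phi> = outer w"
    and w_parity: "\<And>x. x < 2^(L + K) \<Longrightarrow> w $ x \<noteq> 0 \<Longrightarrow> even_occ x = pw"
    using fpure_obtain_vector[OF \<Phi>(1)] by metis
  define A where "A = coeff_matrix (2^L) (2^M) v"
  define C where "C = coeff_matrix (2^L) (2^K) w"
  have gram: "gram (2^M) A i i' = gram (2^K) C i i'" if "i < 2^L" "i' < 2^L" for i i'
    using fptrace_outer[OF v(1) that] fptrace_outer[OF w(1) that] \<Psi>(2) \<Phi>(2) v(2) w(2)
    by (simp add: A_def C_def)
  have parity_A: "\<And>i j. A i j \<noteq> 0 \<Longrightarrow> (even_occ i = even_occ j) = pv"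
    unfolding A_def using coeff_matrix_parity[OF v_parity] .
  have parity_C: "\<And>i l. C i l \<noteq> 0 \<Longrightarrow> (even_occ i = even_occ l) = pw"
    unfolding C_def using coeff_matrix_parity[OF w_parity] .
  obtain D where D_A: "\<And>i l. i < 2^L \<Longrightarrow> l < 2^K \<Longrightarrow>
      mat_apply (2^M) D (A i) l = (if pv = pw \<or> even_occ i then 1 else -1) * C i l"
    and contraction: "\<And>x. Re (cinner (2^K) (mat_apply (2^M) D x) (mat_apply (2^M) D x)) \<le> Re (cinner (2^M) x x)"
    and isometric: "\<And>i. i < 2^L \<Longrightarrow>
      cinner (2^K) (mat_apply (2^M) D (A i)) (mat_apply (2^M) D (A i)) = cinner (2^M) (A i) (A i)"
    and parity: "\<And>l j. D l j \<noteq> 0 \<Longrightarrow> (even_occ l = even_occ j) = (pv = pw)"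
    using signed_gram_intertwiner[where n="2^L" and m="2^M" and A=A and k="2^K" and C=C and \<pi>=even_occ,
        OF gram parity_A parity_C] by blast
  obtain Es where channel: "fchannel M K (mat (2^K) (2^M) (\<lambda>(l, j). D l j) # Es)"
    and annihilate: "\<And>E a l. E \<in> set Es \<Longrightarrow>
      cinner (2^K) (mat_apply (2^M) D a) (mat_apply (2^M) D a) = cinner (2^M) a a \<Longrightarrow>
      l < 2^K \<Longrightarrow> (\<Sum>j<2^M. E $$ (l, j) * a j) = 0"
    using parity_contraction_kraus_completion[OF contraction parity] by blast
  have "(if even_kraus M K (mat (2^K) (2^M) (\<lambda>(l, j). D l j)) \<or> even_occ i then 1 else -1)
      * mat_apply (2^M) D (coeff_matrix (2^L) (2^M) v i) l = coeff_matrix (2^L) (2^K) w i l"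
    if "i < 2^L" "l < 2^K" for i l
    using parity_kraus_sign_cancel[OF parity D_A[OF that] that(2)] unfolding A_def C_def .
  moreover have "(\<Sum>j<2^M. F $$ (l, j) * coeff_matrix (2^L) (2^M) v i j) = 0"
    if "F \<in> set Es" "i < 2^L" "l < 2^K" for F i l
    using annihilate[OF that(1) isometric[OF that(2)] that(3)] unfolding A_def .
  ultimately have "apply_kraus (2^(L + K)) (id_par L M K (mat (2^K) (2^M) (\<lambda>(l, j). D l j) # Es)) (outer v)
      = outer w"
    by (rule apply_kraus_id_par_outer[OF channel v(1) w(1)])
  then show ?thesis
    using channel v(2) w(2) by blast
qed

theorem proposition2:
  fixes L :: nat and \<rho> :: "complex mat"
  assumes "fstate L \<rho>"
  shows "(\<rho> \<noteq> 0\<^sub>m (2^L) (2^L) \<longrightarrow> (\<exists>M \<Psi>. fpure (L + M) \<Psi> \<and> fptrace L M \<Psi> = \<rho>))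
    \<and> (\<forall>M K \<Psi> \<Phi>. fpure (L + M) \<Psi> \<and> fptrace L M \<Psi> = \<rho> \<and>
                   fpure (L + K) \<Phi> \<and> fptrace L K \<Phi> = \<rho> \<longrightarrow>
          (\<exists>Ks. fchannel M K Ks \<and> apply_kraus (2^(L + K)) (id_par L M K Ks) \<Psi> = \<Phi>))"
  using fermionic_purification_exists[OF assms] purifications_related_by_channel by blast

end
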